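(* Let $H$ be the native RKHS of the Gaussian RBF kernel on $\mathbb{R}^n$, and let $F : \mathbb{R}^n \to \mathbb{R}^n$. Suppose the Koopman operator $\mathcal{K}_F g = g \circ F$ maps all of $H$ into $H$ and is bounded. Then every component of $F$ is a real analytic function on $\mathbb{R}^n$.
   Context: The Gaussian RBF kernel on $\mathbb{R}^n$ is $K(x,y) = \exp\!\left(-\|x-y\|_2^2/2\right)$. Its native space is the real RKHS of functions on $\mathbb{R}^n$ having this reproducing kernel. Every function in this space is real analytic on $\mathbb{R}^n$. *)

theory Defs
  imports "HOL-Analysis.Analysis"
begin

definition gauss_kernel :: "real ^ 'n \<Rightarrow> real ^ 'n \<Rightarrow> real" where
  "gauss_kernel x y = exp (- (norm (x - y))\<^sup>2 / 2)"

definition is_rkhs ::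
  "('a \<Rightarrow> 'a \<Rightarrow> real) \<Rightarrow> ('a \<Rightarrow> real) set \<Rightarrow> (('a \<Rightarrow> real) \<Rightarrow> ('a \<Rightarrow> real) \<Rightarrow> real) \<Rightarrow> bool" where
  "is_rkhs K H ip \<longleftrightarrow>
     (\<lambda>x. 0) \<in> H \<and>
     (\<forall>f\<in>H. \<forall>g\<in>H. (\<lambda>x. f x + g x) \<in> H) \<and>
     (\<forall>c. \<forall>f\<in>H. (\<lambda>x. c * f x) \<in> H) \<and>
     (\<forall>f\<in>H. \<forall>g\<in>H. ip f g = ip g f) \<and>
     (\<forall>f\<in>H. \<forall>g\<in>H. \<forall>h\<in>H. ip (\<lambda>x. f x + g x) h = ip f h + ip g h) \<and>
     (\<forall>c. \<forall>f\<in>H. \<forall>g\<in>H. ip (\<lambda>x. c * f x) g = c * ip f g) \<and>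
     (\<forall>f\<in>H. 0 \<le> ip f f) \<and>
     (\<forall>f\<in>H. ip f f = 0 \<longrightarrow> f = (\<lambda>x. 0)) \<and>
     (\<forall>X. (\<forall>k. X k \<in> H) \<and>
          (\<forall>e>0. \<exists>N. \<forall>m\<ge>N. \<forall>k\<ge>N.
              sqrt (ip (\<lambda>x. X m x - X k x) (\<lambda>x. X m x - X k x)) < e)
        \<longrightarrow> (\<exists>f\<in>H. (\<lambda>k. sqrt (ip (\<lambda>x. X k x - f x) (\<lambda>x. X k x - f x))) \<longlonglongrightarrow> 0)) \<and>
     (\<forall>y. (\<lambda>x. K x y) \<in> H) \<and>
     (\<forall>f\<in>H. \<forall>y. ip f (\<lambda>x. K x y) = f y)"

text \<open>Real analyticity on a set S of R^n: near every point a of S, f is the sum of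
  an (unconditionally, i.e. absolutely) convergent multivariate power series
  centred at a, indexed by multi-indices alpha :: 'n => nat.\<close>
definition real_analytic_on :: "(real ^ 'n \<Rightarrow> real) \<Rightarrow> (real ^ 'n) set \<Rightarrow> bool" where
  "real_analytic_on f S \<longleftrightarrow>
     (\<forall>a\<in>S. \<exists>r>0. \<exists>c :: ('n \<Rightarrow> nat) \<Rightarrow> real.
        \<forall>x\<in>ball a r.
          ((\<lambda>\<alpha>. c \<alpha> * (\<Prod>i\<in>UNIV. (x $ i - a $ i) ^ \<alpha> i)) has_sum f x) UNIV)"

end

theory Submission
  imports Defs "HOL-Library.Function_Algebras"
begin

(* Write K for the Gaussian kernel and call f dominated with constant M if M K - f \<otimes> f is
   positive semidefinite. A bounded Koopman operator with norm C turns a function dominated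
   with constant M into f \<circ> F, dominated with constant M C\<^sup>2. The kernel section K(x, 0) and
   the function x\<^sub>i K(x, 0), a limit of difference quotients of kernel sections, are dominated
   with constant 1, hence so are p(x) = K(F x, 0) and q(x) = F\<^sub>i(x) K(F x, 0), up to C\<^sup>2.

   Multiplying by exp(|h|\<^sup>2/2) turns domination by K around a point a into domination by the
   kernel exp(x \<bullet> y) = \<Sum>\<^sub>\<alpha> x\<^sup>\<alpha> y\<^sup>\<alpha> / \<alpha>!. A function dominated by that kernel is the sum of its
   Taylor series everywhere: its derivatives at 0 are limits of finite-difference quotients,
   and the domination bounds the Taylor remainder by the tail of \<Sum>\<^sub>\<alpha> (h\<^sup>\<alpha>)\<^sup>2 / \<alpha>!.
   Hence p and q are power series around every point, and since p > 0 the quotient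
   F\<^sub>i = q / p is locally a power series as well. *)

section \<open>Multi-index power series\<close>

definition mpow :: "real^'n \<Rightarrow> ('n \<Rightarrow> nat) \<Rightarrow> real" where
  "mpow x \<alpha> = (\<Prod>i\<in>UNIV. (x $ i) ^ \<alpha> i)"

definition mfact :: "('n::finite \<Rightarrow> nat) \<Rightarrow> real" where
  "mfact \<alpha> = (\<Prod>i\<in>UNIV. fact (\<alpha> i))"

definition mbox :: "('n::finite \<Rightarrow> nat) \<Rightarrow> ('n \<Rightarrow> nat) set" where
  "mbox \<alpha> = PiE UNIV (\<lambda>i. {..\<alpha> i})"

lemma mfact_pos: "0 < mfact \<alpha>"
  unfolding mfact_def by (intro prod_pos) auto

lemma mpow_add: "mpow x (\<alpha> + \<beta>) = mpow x \<alpha> * mpow x \<beta>"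
  unfolding mpow_def by (simp add: power_add prod.distrib)

lemma mpow_zero_index [simp]: "mpow x 0 = 1"
  unfolding mpow_def by simp

lemma mpow_zero: "mpow (0::real^'n::finite) \<alpha> = (if \<alpha> = 0 then 1 else 0)"
proof (cases "\<alpha> = 0")
  case False
  then obtain i where "\<alpha> i \<noteq> 0" by (auto simp: fun_eq_iff)
  then have "mpow (0::real^'n) \<alpha> = 0"
    unfolding mpow_def by (intro prod_zero) (auto intro!: bexI[of _ i])
  then show ?thesis
    using False by simp
qed simp

lemma abs_mpow: "\<bar>mpow x \<alpha>\<bar> = mpow (\<chi> i. \<bar>x $ i\<bar>) \<alpha>"
  unfolding mpow_def by (simp add: abs_prod power_abs)

lemma mpow_abs_nonneg: "0 \<le> mpow (\<chi> i. \<bar>x $ i\<bar>) \<alpha>"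
  unfolding mpow_def by (auto intro: prod_nonneg)

lemma finite_mbox [simp]: "finite (mbox \<alpha>)"
  unfolding mbox_def by (rule finite_PiE) auto

lemma mem_mbox_iff: "\<beta> \<in> mbox \<alpha> \<longleftrightarrow> (\<forall>i. \<beta> i \<le> \<alpha> i)"
  unfolding mbox_def by (auto simp: PiE_UNIV_domain)

lemma real_has_sum_imp_abs_summable:
  fixes f :: "'a \<Rightarrow> real"
  shows "(f has_sum s) A \<Longrightarrow> (\<lambda>x. \<bar>f x\<bar>) summable_on A"
  using has_sum_imp_summable summable_on_iff_abs_summable_on_real by fastforce

lemma abs_has_sum_le:
  fixes f g :: "'a \<Rightarrow> real"
  assumes "(f has_sum a) A" "(g has_sum b) A" "\<And>x. x \<in> A \<Longrightarrow> \<bar>f x\<bar> \<le> g x"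
  shows "\<bar>a\<bar> \<le> b"
proof -
  have "a \<le> b"
    by (rule has_sum_mono[OF assms(1,2)]) (use assms(3) abs_le_iff in blast)
  moreover have "- a \<le> b"
    by (rule has_sum_mono[OF has_sum_uminusI[OF assms(1)] assms(2)]) (use assms(3) abs_le_iff in blast)
  ultimately show ?thesis
    by linarith
qed

lemma has_sum_diff:
  fixes f g :: "'a \<Rightarrow> 'b::topological_ab_group_add"
  assumes "(f has_sum a) A" "(g has_sum b) A"
  shows "((\<lambda>x. f x - g x) has_sum (a - b)) A"
proof -
  have "((\<lambda>x. - g x) has_sum - b) A"
    using has_sum_uminus[where f=g and a="- b"] assms(2) by simp
  from has_sum_add[OF assms(1) this] show ?thesis
    by simp
qed

lemma has_sum_sum:
  fixes f :: "'j \<Rightarrow> 'a \<Rightarrow> 'b::topological_comm_monoid_add"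
  assumes "finite J" "\<And>j. j \<in> J \<Longrightarrow> (f j has_sum s j) A"
  shows "((\<lambda>x. \<Sum>j\<in>J. f j x) has_sum (\<Sum>j\<in>J. s j)) A"
  using assms by (induction J rule: finite_induct) (auto intro: has_sum_add)

lemma has_sum_delta_zero: "((\<lambda>\<alpha>::'n::finite \<Rightarrow> nat. if \<alpha> = 0 then v else 0) has_sum v) UNIV"
proof -
  have "((\<lambda>\<alpha>::'n \<Rightarrow> nat. if \<alpha> = 0 then v else 0) has_sum v) {0}"
    using has_sum_finite[of "{0::'n \<Rightarrow> nat}" "\<lambda>\<alpha>. if \<alpha> = 0 then v else 0"] by simp
  then show ?thesis
    by (subst (asm) has_sum_cong_neutral[where T=UNIV]) auto
qed

lemma has_sum_prod_multi_index:
  fixes f :: "'n::finite \<Rightarrow> nat \<Rightarrow> real"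
  assumes "\<And>i. (\<lambda>k. norm (f i k)) summable_on UNIV"
    and "\<And>i. (f i has_sum s i) UNIV"
  shows "((\<lambda>\<alpha>. \<Prod>i\<in>UNIV. f i (\<alpha> i)) has_sum (\<Prod>i\<in>UNIV. s i)) UNIV"
proof -
  have "Infinite_Set_Sum.abs_summable_on (\<lambda>\<alpha>. \<Prod>i\<in>UNIV. f i (\<alpha> i)) (PiE UNIV (\<lambda>_. UNIV))"
    by (rule abs_summable_on_prod_PiE) (use assms(1) in \<open>auto simp: abs_summable_equivalent[symmetric]\<close>)
  then have "(\<lambda>\<alpha>. norm (\<Prod>i\<in>UNIV. f i (\<alpha> i))) summable_on UNIV"
    by (simp add: abs_summable_equivalent[symmetric] PiE_UNIV_domain)
  then have "(\<lambda>\<alpha>. \<Prod>i\<in>UNIV. f i (\<alpha> i)) summable_on UNIV"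
    by (rule abs_summable_summable)
  moreover have "infsum (\<lambda>\<alpha>. \<Prod>i\<in>UNIV. f i (\<alpha> i)) (PiE UNIV (\<lambda>_. UNIV)) = (\<Prod>i\<in>UNIV. infsum (f i) UNIV)"
    by (rule infsum_prod_PiE_abs) (use assms(1) in simp_all)
  moreover have "infsum (f i) UNIV = s i" for i
    using assms(2) infsumI by blast
  ultimately show ?thesis
    using has_sum_infsum by (fastforce simp: PiE_UNIV_domain)
qed

lemma has_sum_exp: "((\<lambda>k. x ^ k / fact k) has_sum exp x) (UNIV :: nat set)" for x :: real
proof (rule norm_summable_imp_has_sum)
  show "summable (\<lambda>k. norm (x ^ k / fact k))"
    using summable_exp_generic[of "\<bar>x\<bar>"] by (simp add: abs_mult power_abs divide_inverse mult.commute)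
  show "(\<lambda>k. x ^ k / fact k) sums exp x"
    using exp_converges[of x] by (simp add: divide_inverse mult.commute)
qed

lemma has_sum_exp_inner:
  "((\<lambda>\<alpha>. mpow x \<alpha> * mpow y \<alpha> / mfact \<alpha>) has_sum exp (x \<bullet> y)) UNIV"
proof -
  have "((\<lambda>\<alpha>. \<Prod>i\<in>UNIV. (x $ i * y $ i) ^ \<alpha> i / fact (\<alpha> i)) has_sum (\<Prod>i\<in>UNIV. exp (x $ i * y $ i))) UNIV"
  proof (rule has_sum_prod_multi_index)
    fix i
    show "(\<lambda>k. norm ((x $ i * y $ i) ^ k / fact k)) summable_on UNIV"
      using real_has_sum_imp_abs_summable[OF has_sum_exp] by simp
  qed (rule has_sum_exp)
  moreover have "(\<Prod>i\<in>UNIV. exp (x $ i * y $ i)) = exp (x \<bullet> y)"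
    by (simp add: inner_vec_def exp_sum)
  moreover have "(\<Prod>i\<in>UNIV. (x $ i * y $ i) ^ \<alpha> i / fact (\<alpha> i)) = mpow x \<alpha> * mpow y \<alpha> / mfact \<alpha>" for \<alpha>
    by (simp only: mpow_def mfact_def prod_dividef power_mult_distrib prod.distrib times_divide_eq_left)
  ultimately show ?thesis
    by simp
qed

section \<open>Products and reciprocals of multi-index power series\<close>

definition mconv :: "(('n::finite \<Rightarrow> nat) \<Rightarrow> real) \<Rightarrow> (('n \<Rightarrow> nat) \<Rightarrow> real) \<Rightarrow> ('n \<Rightarrow> nat) \<Rightarrow> real" where
  "mconv c d \<gamma> = (\<Sum>\<alpha>\<in>mbox \<gamma>. c \<alpha> * d (\<gamma> - \<alpha>))"

lemma has_sum_times:
  fixes f g :: "'a \<Rightarrow> real"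
  assumes f: "(f has_sum A) UNIV" and g: "(g has_sum B) UNIV"
  shows "((\<lambda>(x, y). f x * g y) has_sum (A * B)) (UNIV \<times> UNIV)"
proof (rule has_sum_SigmaI)
  show "((\<lambda>y. case (x, y) of (x, y) \<Rightarrow> f x * g y) has_sum f x * B) UNIV" for x
    using has_sum_cmult_right[OF g] by simp
  show "((\<lambda>x. f x * B) has_sum A * B) UNIV"
    by (rule has_sum_cmult_left[OF f])
  have sections: "(\<lambda>y. norm (f x * g y)) summable_on UNIV" for x
    using summable_on_cmult_right[OF real_has_sum_imp_abs_summable[OF g], of "\<bar>f x\<bar>"]
    by (simp add: abs_mult)
  have "(\<lambda>x. \<bar>f x\<bar> * infsum (\<lambda>y. \<bar>g y\<bar>) UNIV) summable_on UNIV"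
    by (rule summable_on_cmult_left[OF real_has_sum_imp_abs_summable[OF f]])
  then have "(\<lambda>x. norm (infsum (\<lambda>y. norm (f x * g y)) UNIV)) summable_on UNIV"
    by (simp add: abs_mult infsum_cmult_right' infsum_nonneg)
  then have "(\<lambda>z. norm (case z of (x, y) \<Rightarrow> f x * g y)) summable_on UNIV \<times> UNIV"
    by (intro iffD2[OF Infinite_Sum.abs_summable_on_Sigma_iff]) (use sections in simp)
  then show "(\<lambda>(x, y). f x * g y) summable_on UNIV \<times> UNIV"
    by (rule abs_summable_summable)
qed

lemma has_sum_mconv:
  assumes c: "((\<lambda>\<alpha>. c \<alpha> * mpow x \<alpha>) has_sum A) UNIV"
    and d: "((\<lambda>\<alpha>. d \<alpha> * mpow x \<alpha>) has_sum B) UNIV"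
  shows "((\<lambda>\<gamma>. mconv c d \<gamma> * mpow x \<gamma>) has_sum (A * B)) UNIV"
proof -
  define P where "P = (\<lambda>(\<alpha>, \<beta>). (c \<alpha> * mpow x \<alpha>) * (d \<beta> * mpow x \<beta>))"
  define split where "split = (\<lambda>(\<gamma>::'a \<Rightarrow> nat, \<alpha>). (\<alpha>, \<gamma> - \<alpha>))"
  have bij: "bij_betw split (Sigma UNIV mbox) (UNIV \<times> UNIV)"
    by (rule bij_betwI[where g="\<lambda>(\<alpha>, \<beta>). (\<alpha> + \<beta>, \<alpha>)"])
       (auto simp: split_def mem_mbox_iff fun_eq_iff)
  have "((\<lambda>z. P (split z)) has_sum (A * B)) (Sigma UNIV mbox)"
    using has_sum_times[OF c d] unfolding has_sum_reindex_bij_betw[OF bij] P_def .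
  moreover have "((\<lambda>\<alpha>. P (split (\<gamma>, \<alpha>))) has_sum (mconv c d \<gamma> * mpow x \<gamma>)) (mbox \<gamma>)" for \<gamma>
  proof -
    have "P (split (\<gamma>, \<alpha>)) = c \<alpha> * d (\<gamma> - \<alpha>) * mpow x \<gamma>" if "\<alpha> \<in> mbox \<gamma>" for \<alpha>
    proof -
      have "\<gamma> = \<alpha> + (\<gamma> - \<alpha>)"
        using that by (auto simp: mem_mbox_iff fun_eq_iff)
      then have "mpow x \<gamma> = mpow x \<alpha> * mpow x (\<gamma> - \<alpha>)"
        by (metis mpow_add)
      then show ?thesis
        unfolding P_def split_def by simp
    qed
    then show ?thesis
      using has_sum_finite[OF finite_mbox, of "\<lambda>\<alpha>. P (split (\<gamma>, \<alpha>))" \<gamma>]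
      by (simp add: mconv_def sum_distrib_right)
  qed
  ultimately show ?thesis
    by (rule has_sum_Sigma')
qed

lemma power_series_coeff_zero:
  assumes "((\<lambda>\<alpha>. c \<alpha> * mpow (0::real^'n::finite) \<alpha>) has_sum s) UNIV"
  shows "c 0 = s"
  using has_sum_delta_zero[of "c 0"] assms has_sum_unique
  by (fastforce simp: mpow_zero if_distrib cong: if_cong)

primrec mconv_pow :: "(('n::finite \<Rightarrow> nat) \<Rightarrow> real) \<Rightarrow> nat \<Rightarrow> ('n \<Rightarrow> nat) \<Rightarrow> real" where
  "mconv_pow c 0 = (\<lambda>\<alpha>. if \<alpha> = 0 then 1 else 0)"
| "mconv_pow c (Suc k) = mconv c (mconv_pow c k)"

lemma has_sum_mconv_pow:
  assumes "((\<lambda>\<alpha>. c \<alpha> * mpow x \<alpha>) has_sum s) UNIV"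
  shows "((\<lambda>\<alpha>. mconv_pow c k \<alpha> * mpow x \<alpha>) has_sum s ^ k) UNIV"
proof (induction k)
  case 0
  have "(\<lambda>\<alpha>. mconv_pow c 0 \<alpha> * mpow x \<alpha>) = (\<lambda>\<alpha>. if \<alpha> = 0 then 1 else 0)"
    by auto
  then show ?case
    using has_sum_delta_zero[of 1] by simp
next
  case (Suc k)
  then show ?case
    using has_sum_mconv[OF assms] by simp
qed

lemma abs_mconv_pow_le: "\<bar>mconv_pow c k \<alpha>\<bar> \<le> mconv_pow (\<lambda>\<alpha>. \<bar>c \<alpha>\<bar>) k \<alpha>"
proof (induction k arbitrary: \<alpha>)
  case (Suc k)
  have "\<bar>mconv_pow c (Suc k) \<alpha>\<bar> \<le> (\<Sum>\<beta>\<in>mbox \<alpha>. \<bar>c \<beta> * mconv_pow c k (\<alpha> - \<beta>)\<bar>)"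
    unfolding mconv_pow.simps mconv_def by (rule sum_abs)
  also have "\<dots> \<le> (\<Sum>\<beta>\<in>mbox \<alpha>. \<bar>c \<beta>\<bar> * mconv_pow (\<lambda>\<alpha>. \<bar>c \<alpha>\<bar>) k (\<alpha> - \<beta>))"
    by (intro sum_mono) (auto simp: abs_mult intro: mult_left_mono Suc)
  finally show ?case
    by (simp add: mconv_def)
qed simp

lemma has_sum_geometric:
  fixes q :: real
  assumes "\<bar>q\<bar> < 1"
  shows "((\<lambda>k. q ^ k) has_sum (1 / (1 - q))) UNIV"
  using assms geometric_sums[of q]
  by (intro norm_summable_imp_has_sum) (auto simp: power_abs summable_geometric)

lemma infsum_abs_mconv_pow_le:
  assumes abs_ser: "((\<lambda>\<alpha>. \<bar>c \<alpha>\<bar> * mpow (\<chi> i. \<bar>x $ i\<bar>) \<alpha>) has_sum \<sigma>) UNIV"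
  shows "infsum (\<lambda>\<alpha>. norm (mconv_pow c k \<alpha> * mpow x \<alpha>)) UNIV \<le> \<sigma> ^ k"
proof -
  have abs_pow: "((\<lambda>\<alpha>. mconv_pow (\<lambda>\<alpha>. \<bar>c \<alpha>\<bar>) k \<alpha> * mpow (\<chi> i. \<bar>x $ i\<bar>) \<alpha>) has_sum \<sigma> ^ k) UNIV"
    by (rule has_sum_mconv_pow[OF abs_ser])
  have le: "norm (mconv_pow c k \<alpha> * mpow x \<alpha>) \<le> mconv_pow (\<lambda>\<alpha>. \<bar>c \<alpha>\<bar>) k \<alpha> * mpow (\<chi> i. \<bar>x $ i\<bar>) \<alpha>" for \<alpha>
    by (simp add: abs_mult abs_mpow mult_right_mono abs_mconv_pow_le mpow_abs_nonneg)
  have "(\<lambda>\<alpha>. norm (mconv_pow c k \<alpha> * mpow x \<alpha>)) summable_on UNIV"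
    by (rule summable_on_comparison_test[OF has_sum_imp_summable[OF abs_pow]]) (use le in auto)
  then have "infsum (\<lambda>\<alpha>. norm (mconv_pow c k \<alpha> * mpow x \<alpha>)) UNIV
      \<le> infsum (\<lambda>\<alpha>. mconv_pow (\<lambda>\<alpha>. \<bar>c \<alpha>\<bar>) k \<alpha> * mpow (\<chi> i. \<bar>x $ i\<bar>) \<alpha>) UNIV"
    by (rule infsum_mono[OF _ has_sum_imp_summable[OF abs_pow] le])
  then show ?thesis
    using infsumI[OF abs_pow] by simp
qed

lemma has_sum_geometric_power_series:
  fixes c :: "('n::finite \<Rightarrow> nat) \<Rightarrow> real"
  assumes ser: "((\<lambda>\<alpha>. c \<alpha> * mpow x \<alpha>) has_sum \<rho>) UNIV"
    and abs_ser: "((\<lambda>\<alpha>. \<bar>c \<alpha>\<bar> * mpow (\<chi> i. \<bar>x $ i\<bar>) \<alpha>) has_sum \<sigma>) UNIV"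
    and "\<sigma> < 1"
  shows "((\<lambda>\<alpha>. (\<Sum>\<^sub>\<infinity>k. mconv_pow c k \<alpha>) * mpow x \<alpha>) has_sum (1 / (1 - \<rho>))) UNIV"
proof -
  have "\<bar>\<rho>\<bar> \<le> \<sigma>"
    by (rule abs_has_sum_le[OF ser abs_ser]) (simp add: abs_mult abs_mpow)
  then have \<rho>: "\<bar>\<rho>\<bar> < 1"
    using \<open>\<sigma> < 1\<close> by linarith
  have "0 \<le> \<sigma>"
    using abs_ser by (rule has_sum_nonneg) (simp add: mpow_abs_nonneg)
  then have geo: "((\<lambda>k. \<sigma> ^ k) has_sum (1 / (1 - \<sigma>))) UNIV"
    using \<open>\<sigma> < 1\<close> by (intro has_sum_geometric) simp
  define F where "F = (\<lambda>(k, \<alpha>). mconv_pow c k \<alpha> * mpow x \<alpha>)"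
  have Fk: "((\<lambda>\<alpha>. F (k, \<alpha>)) has_sum \<rho> ^ k) UNIV" for k
    unfolding F_def using has_sum_mconv_pow[OF ser] by simp
  have norm_Fk: "infsum (\<lambda>\<alpha>. norm (F (k, \<alpha>))) UNIV \<le> \<sigma> ^ k" for k
    using infsum_abs_mconv_pow_le[OF abs_ser, of k] by (simp add: F_def)
  have "(\<lambda>z. norm (F z)) summable_on Sigma UNIV (\<lambda>_. UNIV)"
  proof (rule iffD2[OF Infinite_Sum.abs_summable_on_Sigma_iff], intro conjI ballI)
    show "(\<lambda>\<alpha>. norm (F (k, \<alpha>))) summable_on UNIV" for k
      using real_has_sum_imp_abs_summable[OF Fk[of k]] by simp
    have "(\<lambda>k. infsum (\<lambda>\<alpha>. norm (F (k, \<alpha>))) UNIV) summable_on UNIV"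
      by (rule summable_on_comparison_test[OF has_sum_imp_summable[OF geo]])
         (use norm_Fk in \<open>auto intro: infsum_nonneg\<close>)
    then show "(\<lambda>k. norm (infsum (\<lambda>\<alpha>. norm (F (k, \<alpha>))) UNIV)) summable_on UNIV"
      by (simp add: infsum_nonneg)
  qed
  then obtain S where HS: "(F has_sum S) (UNIV \<times> UNIV)"
    using abs_summable_summable unfolding summable_on_def by fastforce
  have "((\<lambda>k. \<rho> ^ k) has_sum S) UNIV"
    by (rule has_sum_Sigma'[OF HS Fk])
  then have S: "S = 1 / (1 - \<rho>)"
    using has_sum_geometric[OF \<rho>] has_sum_unique by blast
  have HS': "((\<lambda>(\<alpha>, k). F (k, \<alpha>)) has_sum S) (UNIV \<times> UNIV)"
    using HS has_sum_swap by blast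
  have "((\<lambda>k. F (k, \<alpha>)) has_sum (\<Sum>\<^sub>\<infinity>k. mconv_pow c k \<alpha>) * mpow x \<alpha>) UNIV" for \<alpha>
  proof -
    have "(\<lambda>k. F (k, \<alpha>)) summable_on UNIV"
      using summable_on_SigmaD1[of "\<lambda>\<alpha> k. F (k, \<alpha>)", OF has_sum_imp_summable[OF HS']] by simp
    moreover have "infsum (\<lambda>k. F (k, \<alpha>)) UNIV = (\<Sum>\<^sub>\<infinity>k. mconv_pow c k \<alpha>) * mpow x \<alpha>"
      unfolding F_def by (simp add: infsum_cmult_left')
    ultimately show ?thesis
      by (metis has_sum_infsum)
  qed
  then show ?thesis
    using has_sum_Sigma'[OF HS'] S by simp
qed

lemma mpow_const: "mpow (\<chi> i. r) \<alpha> = r ^ (\<Sum>i\<in>UNIV. \<alpha> i)"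
  by (simp add: mpow_def power_sum)

lemma mpow_abs_le_scaled:
  assumes "\<alpha> \<noteq> 0" and \<epsilon>: "0 \<le> \<epsilon>" "\<epsilon> \<le> 1" and "0 \<le> r" and x: "\<And>i. \<bar>x $ i\<bar> \<le> \<epsilon> * r"
  shows "mpow (\<chi> i. \<bar>x $ i\<bar>) \<alpha> \<le> \<epsilon> * mpow (\<chi> i. r) \<alpha>"
proof -
  obtain i0 where "\<alpha> i0 \<noteq> 0"
    using \<open>\<alpha> \<noteq> 0\<close> by (auto simp: fun_eq_iff)
  then have degree: "1 \<le> (\<Sum>i\<in>UNIV. \<alpha> i)"
    using member_le_sum[of i0 UNIV \<alpha>] by simp
  have "mpow (\<chi> i. \<bar>x $ i\<bar>) \<alpha> \<le> (\<Prod>i\<in>UNIV. (\<epsilon> * r) ^ \<alpha> i)"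
    unfolding mpow_def using x by (intro prod_mono) (auto intro: power_mono)
  also have "\<dots> = \<epsilon> ^ (\<Sum>i\<in>UNIV. \<alpha> i) * mpow (\<chi> i. r) \<alpha>"
    by (simp add: mpow_const power_sum power_mult_distrib prod.distrib)
  also have "\<dots> \<le> \<epsilon> * mpow (\<chi> i. r) \<alpha>"
    using power_decreasing[OF degree, of \<epsilon>] \<epsilon> \<open>0 \<le> r\<close> by (intro mult_right_mono) (auto simp: mpow_const)
  finally show ?thesis .
qed

lemma power_series_abs_small:
  fixes c :: "('n::finite \<Rightarrow> nat) \<Rightarrow> real"
  assumes c0: "c 0 = 0" and r0: "0 < r0" and e: "0 < e"
    and summable: "(\<lambda>\<alpha>. \<bar>c \<alpha>\<bar> * mpow (\<chi> i. r0) \<alpha>) summable_on UNIV"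
  shows "\<exists>\<delta>>0. \<forall>x. norm x < \<delta> \<longrightarrow>
           (\<exists>\<sigma>\<le>e. ((\<lambda>\<alpha>. \<bar>c \<alpha>\<bar> * mpow (\<chi> i. \<bar>x $ i\<bar>) \<alpha>) has_sum \<sigma>) UNIV)"
proof -
  define A where "A = infsum (\<lambda>\<alpha>. \<bar>c \<alpha>\<bar> * mpow (\<chi> i. r0) \<alpha>) UNIV"
  have "0 \<le> A"
    unfolding A_def using r0 by (intro infsum_nonneg) (simp add: mpow_const)
  define \<epsilon> where "\<epsilon> = min 1 (e / (A + 1))"
  have "\<epsilon> * A \<le> e / (A + 1) * A"
    using \<open>0 \<le> A\<close> by (intro mult_right_mono) (auto simp: \<epsilon>_def)
  also have "\<dots> \<le> e"
    using \<open>0 \<le> A\<close> e by (simp add: field_simps)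
  finally have \<epsilon>A: "\<epsilon> * A \<le> e" .
  have \<epsilon>: "0 < \<epsilon>" "\<epsilon> \<le> 1"
    using \<open>0 \<le> A\<close> e by (auto simp: \<epsilon>_def)
  show ?thesis
  proof (rule exI[of _ "\<epsilon> * r0"], intro conjI allI impI)
    show "0 < \<epsilon> * r0"
      using \<epsilon> r0 by simp
    fix x :: "real^'n"
    assume x: "norm x < \<epsilon> * r0"
    have xi: "\<bar>x $ i\<bar> \<le> \<epsilon> * r0" for i
      using component_le_norm_cart[of x i] x by simp
    have le: "\<bar>c \<alpha>\<bar> * mpow (\<chi> i. \<bar>x $ i\<bar>) \<alpha> \<le> \<epsilon> * (\<bar>c \<alpha>\<bar> * mpow (\<chi> i. r0) \<alpha>)" for \<alpha>
    proof (cases "\<alpha> = 0")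
      case False
      then have "mpow (\<chi> i. \<bar>x $ i\<bar>) \<alpha> \<le> \<epsilon> * mpow (\<chi> i. r0) \<alpha>"
        using \<epsilon> r0 xi by (intro mpow_abs_le_scaled) auto
      then show ?thesis
        by (metis abs_ge_zero mult.left_commute mult_left_mono)
    qed (simp add: c0)
    have "(\<lambda>\<alpha>. \<bar>c \<alpha>\<bar> * mpow (\<chi> i. \<bar>x $ i\<bar>) \<alpha>) summable_on UNIV"
      by (rule summable_on_comparison_test[OF summable_on_cmult_right[OF summable, of \<epsilon>]])
         (use le in \<open>auto simp: mpow_abs_nonneg\<close>)
    moreover have "infsum (\<lambda>\<alpha>. \<bar>c \<alpha>\<bar> * mpow (\<chi> i. \<bar>x $ i\<bar>) \<alpha>) UNIV \<le> \<epsilon> * A"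
      unfolding A_def infsum_cmult_right'[symmetric]
      by (rule infsum_mono[OF calculation summable_on_cmult_right[OF summable] le])
    ultimately show "\<exists>\<sigma>\<le>e. ((\<lambda>\<alpha>. \<bar>c \<alpha>\<bar> * mpow (\<chi> i. \<bar>x $ i\<bar>) \<alpha>) has_sum \<sigma>) UNIV"
      using \<epsilon>A by (intro exI[of _ "infsum (\<lambda>\<alpha>. \<bar>c \<alpha>\<bar> * mpow (\<chi> i. \<bar>x $ i\<bar>) \<alpha>) UNIV"])
        (auto intro: has_sum_infsum)
  qed
qed

lemma has_sum_power_series_normalized:
  assumes ser: "((\<lambda>\<alpha>. c \<alpha> * mpow x \<alpha>) has_sum s) UNIV" and "c 0 \<noteq> 0"
  shows "((\<lambda>\<alpha>. (if \<alpha> = 0 then 0 else - c \<alpha> / c 0) * mpow x \<alpha>) has_sum (1 - s / c 0)) UNIV"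
proof -
  have "((\<lambda>\<alpha>. if \<alpha> = 0 then c \<alpha> * mpow x \<alpha> / c 0 else 0) has_sum 1) UNIV"
    using has_sum_delta_zero[of 1] \<open>c 0 \<noteq> 0\<close> by (simp add: if_distrib cong: if_cong)
  from has_sum_diff[OF this has_sum_divide_const[OF ser, of "c 0"]]
  show ?thesis
    by (rule back_subst[of "\<lambda>f. (f has_sum _) UNIV"]) auto
qed

lemma power_series_inverse:
  fixes c :: "('n::finite \<Rightarrow> nat) \<Rightarrow> real"
  assumes r: "0 < r"
    and ser: "\<And>x. norm x < r \<Longrightarrow> ((\<lambda>\<alpha>. c \<alpha> * mpow x \<alpha>) has_sum g x) UNIV"
    and g0: "g 0 \<noteq> 0"
  shows "\<exists>\<delta>>0. \<exists>d. \<forall>x. norm x < \<delta> \<longrightarrow> ((\<lambda>\<alpha>. d \<alpha> * mpow x \<alpha>) has_sum (1 / g x)) UNIV"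
proof -
  have c0: "c 0 = g 0"
    using power_series_coeff_zero[OF ser] r by simp
  define c' where "c' \<alpha> = (if \<alpha> = 0 then 0 else - c \<alpha> / c 0)" for \<alpha>
  have ser': "((\<lambda>\<alpha>. c' \<alpha> * mpow x \<alpha>) has_sum (1 - g x / c 0)) UNIV" if "norm x < r" for x
    unfolding c'_def using ser[OF that] c0 g0 by (intro has_sum_power_series_normalized) auto
  define r0 where "r0 = r / (2 * real CARD('n))"
  have "0 < r0"
    unfolding r0_def using r by simp
  have "norm (\<chi> i::'n. r0) \<le> real CARD('n) * r0"
    using norm_le_l1_cart[of "\<chi> i::'n. r0"] \<open>0 < r0\<close> by simp
  then have r0_r: "norm (\<chi> i::'n. r0) < r"
    using r by (simp add: r0_def)
  have "(\<lambda>\<alpha>. \<bar>c' \<alpha>\<bar> * mpow (\<chi> i. \<bar>(\<chi> i::'n. r0) $ i\<bar>) \<alpha>) summable_on UNIV"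
    using real_has_sum_imp_abs_summable[OF ser'[OF r0_r]] by (simp add: abs_mult abs_mpow)
  then have "(\<lambda>\<alpha>. \<bar>c' \<alpha>\<bar> * mpow (\<chi> i. r0) \<alpha>) summable_on UNIV"
    using \<open>0 < r0\<close> by simp
  then obtain \<delta> where \<delta>: "0 < \<delta>"
    and small: "\<And>x. norm x < \<delta> \<Longrightarrow> \<exists>\<sigma>\<le>1/2. ((\<lambda>\<alpha>. \<bar>c' \<alpha>\<bar> * mpow (\<chi> i. \<bar>x $ i\<bar>) \<alpha>) has_sum \<sigma>) UNIV"
    using power_series_abs_small[of c' r0 "1/2"] \<open>0 < r0\<close> by (auto simp: c'_def)
  define d where "d \<alpha> = (\<Sum>\<^sub>\<infinity>k. mconv_pow c' k \<alpha>) / c 0" for \<alpha>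
  show ?thesis
  proof (intro exI[of _ "min \<delta> r"] conjI exI[of _ d] allI impI)
    show "0 < min \<delta> r"
      using \<delta> r by simp
    fix x :: "real^'n"
    assume "norm x < min \<delta> r"
    then obtain \<sigma> where "\<sigma> \<le> 1/2" "((\<lambda>\<alpha>. \<bar>c' \<alpha>\<bar> * mpow (\<chi> i. \<bar>x $ i\<bar>) \<alpha>) has_sum \<sigma>) UNIV"
      and "norm x < r"
      using small by force
    then have "((\<lambda>\<alpha>. (\<Sum>\<^sub>\<infinity>k. mconv_pow c' k \<alpha>) * mpow x \<alpha>) has_sum (1 / (1 - (1 - g x / c 0)))) UNIV"
      by (intro has_sum_geometric_power_series ser') auto
    then have "((\<lambda>\<alpha>. (\<Sum>\<^sub>\<infinity>k. mconv_pow c' k \<alpha>) * mpow x \<alpha> / c 0) has_sum (c 0 / g x / c 0)) UNIV"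
      using c0 g0 by (intro has_sum_divide_const) simp
    then show "((\<lambda>\<alpha>. d \<alpha> * mpow x \<alpha>) has_sum (1 / g x)) UNIV"
      using c0 g0 by (simp add: d_def)
  qed
qed

lemma power_series_divide:
  assumes q: "\<And>x. ((\<lambda>\<alpha>. cq \<alpha> * mpow (x - a) \<alpha>) has_sum q x) UNIV"
    and p: "\<And>x. ((\<lambda>\<alpha>. cp \<alpha> * mpow (x - a) \<alpha>) has_sum p x) UNIV"
    and "p a \<noteq> 0"
  shows "\<exists>r>0. \<exists>c. \<forall>x\<in>ball a r. ((\<lambda>\<alpha>. c \<alpha> * mpow (x - a) \<alpha>) has_sum q x / p x) UNIV"
proof -
  have "((\<lambda>\<alpha>. cp \<alpha> * mpow h \<alpha>) has_sum p (a + h)) UNIV" for h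
    using p[of "a + h"] by simp
  then obtain \<delta> d where "0 < \<delta>"
    and d: "\<And>h. norm h < \<delta> \<Longrightarrow> ((\<lambda>\<alpha>. d \<alpha> * mpow h \<alpha>) has_sum (1 / p (a + h))) UNIV"
    using power_series_inverse[of 1 cp "\<lambda>h. p (a + h)"] \<open>p a \<noteq> 0\<close> by force
  have "((\<lambda>\<alpha>. mconv cq d \<alpha> * mpow (x - a) \<alpha>) has_sum q x / p x) UNIV" if "x \<in> ball a \<delta>" for x
    using has_sum_mconv[OF q d[of "x - a"]] that by (simp add: dist_norm norm_minus_commute)
  then show ?thesis
    using \<open>0 < \<delta>\<close> by blast
qed

section \<open>Multivariate finite differences\<close>

definition alt_binom_sum :: "nat \<Rightarrow> (nat \<Rightarrow> real) \<Rightarrow> real" where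
  "alt_binom_sum m f = (\<Sum>j\<le>m. (-1) ^ j * real (m choose j) * f j)"

text \<open>The \<open>m\<close>-th forward difference of \<open>j \<mapsto> j ^ k\<close> at \<open>0\<close>, that is \<open>m!\<close> times a Stirling
  number of the second kind.\<close>
definition fdiff_pow :: "nat \<Rightarrow> nat \<Rightarrow> real" where
  "fdiff_pow m k = (-1) ^ m * alt_binom_sum m (\<lambda>j. real j ^ k)"

lemma alt_binom_sum_Suc: "alt_binom_sum (Suc m) f = alt_binom_sum m f - alt_binom_sum m (\<lambda>j. f (Suc j))"
proof -
  have "alt_binom_sum (Suc m) f = f 0 + (\<Sum>i\<le>m. (-1) ^ Suc i * real (Suc m choose Suc i) * f (Suc i))"
    unfolding alt_binom_sum_def by (subst sum.atMost_Suc_shift) simp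
  also have "\<dots> = f 0 - alt_binom_sum m (\<lambda>j. f (Suc j))
                  - (\<Sum>i\<le>m. (-1) ^ i * real (m choose Suc i) * f (Suc i))"
    by (simp add: alt_binom_sum_def algebra_simps sum.distrib sum_subtractf sum_negf)
  also have "(\<Sum>i\<le>m. (-1) ^ i * real (m choose Suc i) * f (Suc i)) = f 0 - alt_binom_sum m f"
  proof -
    have "alt_binom_sum m f = (\<Sum>j\<le>Suc m. (-1) ^ j * real (m choose j) * f j)"
      unfolding alt_binom_sum_def by simp
    also have "\<dots> = f 0 + (\<Sum>i\<le>m. (-1) ^ Suc i * real (m choose Suc i) * f (Suc i))"
      by (subst sum.atMost_Suc_shift) simp
    finally show ?thesis
      by (simp add: sum_negf[symmetric])
  qed
  finally show ?thesis
    by simp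
qed

lemma alt_binom_sum_sum:
  "finite L \<Longrightarrow> alt_binom_sum m (\<lambda>j. \<Sum>l\<in>L. c l * g l j) = (\<Sum>l\<in>L. c l * alt_binom_sum m (g l))"
  unfolding alt_binom_sum_def by (simp add: sum_distrib_left sum.swap[of _ L] mult_ac)

lemma fdiff_pow_Suc: "fdiff_pow (Suc m) k = (\<Sum>l<k. real (k choose l) * fdiff_pow m l)"
proof -
  have "real (Suc j) ^ k = (\<Sum>l\<le>k. real (k choose l) * real j ^ l)" for j
    using binomial_ring[of "real j" 1 k] by (simp add: mult_ac add.commute)
  then have "alt_binom_sum m (\<lambda>j. real (Suc j) ^ k)
      = (\<Sum>l\<le>k. real (k choose l) * alt_binom_sum m (\<lambda>j. real j ^ l))"
    by (simp only: alt_binom_sum_sum[OF finite_atMost])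
  also have "\<dots> = (\<Sum>l<k. real (k choose l) * alt_binom_sum m (\<lambda>j. real j ^ l))
      + alt_binom_sum m (\<lambda>j. real j ^ k)"
    by (simp add: lessThan_Suc_atMost[symmetric])
  finally have "alt_binom_sum m (\<lambda>j. real (Suc j) ^ k) - alt_binom_sum m (\<lambda>j. real j ^ k)
      = (\<Sum>l<k. real (k choose l) * alt_binom_sum m (\<lambda>j. real j ^ l))"
    by simp
  then show ?thesis
    unfolding fdiff_pow_def alt_binom_sum_Suc by (simp add: sum_distrib_left algebra_simps sum_negf)
qed

lemma fdiff_pow_eq_0: "k < m \<Longrightarrow> fdiff_pow m k = 0"
proof (induction m arbitrary: k)
  case (Suc m)
  then show ?case
    unfolding fdiff_pow_Suc by (intro sum.neutral) auto
qed simp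

lemma fdiff_pow_self: "fdiff_pow m m = fact m"
proof (induction m)
  case 0
  then show ?case
    by (simp add: fdiff_pow_def alt_binom_sum_def)
next
  case (Suc m)
  have "fdiff_pow (Suc m) (Suc m) = real (Suc m choose m) * fdiff_pow m m"
    unfolding fdiff_pow_Suc by (subst sum.remove[of _ m]) (auto simp: fdiff_pow_eq_0 intro!: sum.neutral)
  then show ?case
    using Suc by simp
qed

lemma abs_fdiff_pow_le: "\<bar>fdiff_pow m k\<bar> \<le> 2 ^ m * real m ^ k"
proof -
  have "\<bar>fdiff_pow m k\<bar> = \<bar>alt_binom_sum m (\<lambda>j. real j ^ k)\<bar>"
    by (simp add: fdiff_pow_def abs_mult)
  also have "\<dots> \<le> (\<Sum>j\<le>m. \<bar>(-1) ^ j * real (m choose j) * real j ^ k\<bar>)"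
    unfolding alt_binom_sum_def by (rule sum_abs)
  also have "\<dots> \<le> (\<Sum>j\<le>m. real (m choose j) * real m ^ k)"
    by (intro sum_mono) (auto simp: abs_mult intro!: mult_left_mono power_mono)
  also have "\<dots> = 2 ^ m * real m ^ k"
    by (simp add: sum_distrib_right[symmetric] choose_row_sum flip: of_nat_sum)
  finally show ?thesis .
qed

definition grid :: "real \<Rightarrow> ('n \<Rightarrow> nat) \<Rightarrow> real^'n" where
  "grid t \<beta> = (\<chi> i. t * real (\<beta> i))"

definition mdiff_weight :: "('n::finite \<Rightarrow> nat) \<Rightarrow> real \<Rightarrow> ('n \<Rightarrow> nat) \<Rightarrow> real" where
  "mdiff_weight \<alpha> t \<beta> = (\<Prod>i\<in>UNIV. (-1) ^ \<alpha> i * (-1) ^ \<beta> i * real (\<alpha> i choose \<beta> i) / t ^ \<alpha> i)"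

text \<open>The \<open>\<alpha>\<close>-th forward difference of \<open>G\<close> at \<open>0\<close> with step \<open>t\<close>, divided by \<open>t ^ |\<alpha>|\<close>:
  an approximation of the partial derivative of order \<open>\<alpha>\<close> at \<open>0\<close>.\<close>
definition mdiff :: "(real^'n \<Rightarrow> real) \<Rightarrow> ('n::finite \<Rightarrow> nat) \<Rightarrow> real \<Rightarrow> real" where
  "mdiff G \<alpha> t = (\<Sum>\<beta>\<in>mbox \<alpha>. mdiff_weight \<alpha> t \<beta> * G (grid t \<beta>))"

lemma mdiff_mpow:
  "mdiff (\<lambda>x. mpow x \<gamma>) \<alpha> t = (\<Prod>i\<in>UNIV. t ^ \<gamma> i / t ^ \<alpha> i * fdiff_pow (\<alpha> i) (\<gamma> i))"
proof -
  have "mdiff (\<lambda>x. mpow x \<gamma>) \<alpha> t = (\<Sum>\<beta>\<in>mbox \<alpha>. \<Prod>i\<in>UNIV.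
          (-1) ^ \<alpha> i * (-1) ^ \<beta> i * real (\<alpha> i choose \<beta> i) / t ^ \<alpha> i * (t * real (\<beta> i)) ^ \<gamma> i)"
    by (simp add: mdiff_def mdiff_weight_def mpow_def grid_def flip: prod.distrib)
  also have "\<dots> = (\<Prod>i\<in>UNIV. \<Sum>k\<le>\<alpha> i.
          (-1) ^ \<alpha> i * (-1) ^ k * real (\<alpha> i choose k) / t ^ \<alpha> i * (t * real k) ^ \<gamma> i)"
    unfolding mbox_def by (rule prod_sum_PiE[symmetric]) auto
  also have "\<dots> = (\<Prod>i\<in>UNIV. t ^ \<gamma> i / t ^ \<alpha> i * fdiff_pow (\<alpha> i) (\<gamma> i))"
    unfolding fdiff_pow_def alt_binom_sum_def
    by (intro prod.cong refl) (simp add: sum_distrib_left power_mult_distrib mult_ac)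
  finally show ?thesis .
qed

lemma mdiff_mpow_self: "t \<noteq> 0 \<Longrightarrow> mdiff (\<lambda>x. mpow x \<alpha>) \<alpha> t = mfact \<alpha>"
  by (simp add: mdiff_mpow mfact_def fdiff_pow_self)

lemma mdiff_mpow_eq_0: "\<gamma> i < \<alpha> i \<Longrightarrow> mdiff (\<lambda>x. mpow x \<gamma>) \<alpha> t = 0"
  unfolding mdiff_mpow by (rule prod_zero) (simp, rule bexI[of _ i], simp_all add: fdiff_pow_eq_0)

lemma abs_mdiff_mpow_le:
  assumes t: "0 < t" "t \<le> 1" and le: "\<And>i. \<alpha> i \<le> \<gamma> i" and "\<gamma> \<noteq> \<alpha>"
  shows "\<bar>mdiff (\<lambda>x. mpow x \<gamma>) \<alpha> t\<bar> \<le> t * (\<Prod>i\<in>UNIV. 2 ^ \<alpha> i * real (\<alpha> i) ^ \<gamma> i)"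
proof -
  obtain i0 where "\<gamma> i0 \<noteq> \<alpha> i0"
    using \<open>\<gamma> \<noteq> \<alpha>\<close> by auto
  then have "1 \<le> \<gamma> i0 - \<alpha> i0"
    using le[of i0] by linarith
  also have "\<dots> \<le> (\<Sum>i\<in>UNIV. \<gamma> i - \<alpha> i)"
    by (rule member_le_sum) auto
  finally have order: "1 \<le> (\<Sum>i\<in>UNIV. \<gamma> i - \<alpha> i)" .
  have "t ^ \<gamma> i / t ^ \<alpha> i = t ^ (\<gamma> i - \<alpha> i)" for i
    using t le[of i] by (simp add: power_diff)
  then have "\<bar>mdiff (\<lambda>x. mpow x \<gamma>) \<alpha> t\<bar> = t ^ (\<Sum>i\<in>UNIV. \<gamma> i - \<alpha> i) * (\<Prod>i\<in>UNIV. \<bar>fdiff_pow (\<alpha> i) (\<gamma> i)\<bar>)"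
    using t by (simp add: mdiff_mpow abs_prod abs_mult power_sum flip: prod.distrib)
  also have "\<dots> \<le> t * (\<Prod>i\<in>UNIV. 2 ^ \<alpha> i * real (\<alpha> i) ^ \<gamma> i)"
  proof (rule mult_mono)
    show "t ^ (\<Sum>i\<in>UNIV. \<gamma> i - \<alpha> i) \<le> t"
      using power_decreasing[OF order, of t] t by simp
    show "(\<Prod>i\<in>UNIV. \<bar>fdiff_pow (\<alpha> i) (\<gamma> i)\<bar>) \<le> (\<Prod>i\<in>UNIV. 2 ^ \<alpha> i * real (\<alpha> i) ^ \<gamma> i)"
      by (intro prod_mono conjI abs_fdiff_pow_le) auto
  qed (use t in \<open>auto intro: prod_nonneg\<close>)
  finally show ?thesis .
qed

definition mdiff_defect :: "real \<Rightarrow> ('n::finite \<Rightarrow> nat) \<Rightarrow> ('n \<Rightarrow> nat) \<Rightarrow> real" where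
  "mdiff_defect t \<alpha> \<gamma> = (if \<gamma> = \<alpha> then mfact \<alpha> else 0) - mdiff (\<lambda>x. mpow x \<gamma>) \<alpha> t"

definition defect_majorant :: "('n::finite \<Rightarrow> nat) \<Rightarrow> ('n \<Rightarrow> nat) \<Rightarrow> real" where
  "defect_majorant \<alpha> \<gamma> = (\<Prod>i\<in>UNIV. 4 ^ \<alpha> i * real (\<alpha> i) ^ (2 * \<gamma> i) / fact (\<gamma> i))"

definition defect_majorant_sum :: "('n::finite \<Rightarrow> nat) \<Rightarrow> real" where
  "defect_majorant_sum \<alpha> = (\<Prod>i\<in>UNIV. 4 ^ \<alpha> i * exp ((real (\<alpha> i))\<^sup>2))"

lemma defect_majorant_nonneg: "0 \<le> defect_majorant \<alpha> \<gamma>"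
  unfolding defect_majorant_def by (intro prod_nonneg) auto

lemma has_sum_defect_majorant: "(defect_majorant \<alpha> has_sum defect_majorant_sum \<alpha>) UNIV"
proof -
  have "((\<lambda>\<gamma>. \<Prod>i\<in>UNIV. 4 ^ \<alpha> i * (((real (\<alpha> i))\<^sup>2) ^ \<gamma> i / fact (\<gamma> i))) has_sum
          (\<Prod>i\<in>UNIV. 4 ^ \<alpha> i * exp ((real (\<alpha> i))\<^sup>2))) UNIV"
  proof (rule has_sum_prod_multi_index)
    fix i
    show "(\<lambda>k. norm (4 ^ \<alpha> i * (((real (\<alpha> i))\<^sup>2) ^ k / fact k))) summable_on UNIV"
      using summable_on_cmult_right[OF real_has_sum_imp_abs_summable[OF has_sum_exp[of "(real (\<alpha> i))\<^sup>2"]],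
          of "4 ^ \<alpha> i"]
      by (simp add: abs_mult)
    show "((\<lambda>k. 4 ^ \<alpha> i * (((real (\<alpha> i))\<^sup>2) ^ k / fact k)) has_sum 4 ^ \<alpha> i * exp ((real (\<alpha> i))\<^sup>2)) UNIV"
      by (intro has_sum_cmult_right has_sum_exp)
  qed
  then show ?thesis
    unfolding defect_majorant_def defect_majorant_sum_def by (simp add: power_mult)
qed

lemma mdiff_defect_bound:
  assumes t: "0 < t" "t \<le> 1"
  shows "(mdiff_defect t \<alpha> \<gamma>)\<^sup>2 / mfact \<gamma> \<le> t\<^sup>2 * defect_majorant \<alpha> \<gamma>"
proof (cases "\<gamma> \<noteq> \<alpha> \<and> (\<forall>i. \<alpha> i \<le> \<gamma> i)")
  case True
  define P where "P = (\<Prod>i\<in>UNIV. 2 ^ \<alpha> i * real (\<alpha> i) ^ \<gamma> i)"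
  have "\<bar>mdiff_defect t \<alpha> \<gamma>\<bar> \<le> t * P"
    using True abs_mdiff_mpow_le[OF t, of \<alpha> \<gamma>] by (simp add: mdiff_defect_def P_def)
  then have "(mdiff_defect t \<alpha> \<gamma>)\<^sup>2 \<le> (t * P)\<^sup>2"
    by (metis abs_ge_zero power2_abs power_mono)
  also have "\<dots> = t\<^sup>2 * (\<Prod>i\<in>UNIV. (2 ^ \<alpha> i * real (\<alpha> i) ^ \<gamma> i)\<^sup>2)"
    unfolding P_def by (simp add: power_mult_distrib prod_power_distrib)
  also have "\<dots> = t\<^sup>2 * (\<Prod>i\<in>UNIV. 4 ^ \<alpha> i * real (\<alpha> i) ^ (2 * \<gamma> i))"
  proof -
    have "(2 ^ k * x ^ l)\<^sup>2 = 4 ^ k * x ^ (2 * l)" for k l and x :: real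
      by (simp add: power_mult_distrib power_mult[symmetric] mult.commute[of _ 2] power_mult[of 2 2])
    then show ?thesis
      by simp
  qed
  finally have "(mdiff_defect t \<alpha> \<gamma>)\<^sup>2 / mfact \<gamma>
      \<le> t\<^sup>2 * (\<Prod>i\<in>UNIV. 4 ^ \<alpha> i * real (\<alpha> i) ^ (2 * \<gamma> i)) / mfact \<gamma>"
    using mfact_pos[of \<gamma>] by (simp add: divide_right_mono)
  then show ?thesis
    unfolding defect_majorant_def mfact_def by (simp add: prod_dividef)
next
  case False
  then have "mdiff_defect t \<alpha> \<gamma> = 0"
    using t by (auto simp: mdiff_defect_def mdiff_mpow_self not_le mdiff_mpow_eq_0)
  then show ?thesis
    by (simp add: defect_majorant_nonneg)
qed

section \<open>Kernel domination\<close>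

text \<open>\<open>M \<cdot> K - f \<otimes> f\<close> is a positive semidefinite kernel; for the kernel of an RKHS this says
  that \<open>f\<close> belongs to the space with squared norm at most \<open>M\<close>.\<close>
definition kernel_dominated :: "('a \<Rightarrow> 'a \<Rightarrow> real) \<Rightarrow> real \<Rightarrow> ('a \<Rightarrow> real) \<Rightarrow> bool" where
  "kernel_dominated K M f \<longleftrightarrow>
     (\<forall>S lam. finite S \<longrightarrow> (\<Sum>x\<in>S. lam x * f x)\<^sup>2 \<le> M * (\<Sum>x\<in>S. \<Sum>y\<in>S. lam x * lam y * K x y))"

lemma kernel_dominatedD:
  fixes y :: "'j \<Rightarrow> 'a"
  assumes dom: "kernel_dominated K M f" and J: "finite J"
  shows "(\<Sum>j\<in>J. lam j * f (y j))\<^sup>2 \<le> M * (\<Sum>j\<in>J. \<Sum>l\<in>J. lam j * lam l * K (y j) (y l))"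
proof -
  define w where "w x = (\<Sum>j\<in>{j\<in>J. y j = x}. lam j)" for x
  have collect: "(\<Sum>j\<in>J. lam j * h (y j)) = (\<Sum>x\<in>y ` J. w x * h x)" for h :: "'a \<Rightarrow> real"
  proof -
    have "(\<Sum>j\<in>J. lam j * h (y j)) = (\<Sum>x\<in>y ` J. \<Sum>j\<in>{j\<in>J. y j = x}. lam j * h (y j))"
      by (rule sum.image_gen[OF J])
    also have "\<dots> = (\<Sum>x\<in>y ` J. w x * h x)"
      by (intro sum.cong refl) (simp add: w_def sum_distrib_right)
    finally show ?thesis .
  qed
  have "(\<Sum>j\<in>J. \<Sum>l\<in>J. lam j * lam l * K (y j) (y l)) = (\<Sum>j\<in>J. lam j * (\<Sum>x\<in>y ` J. w x * K (y j) x))"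
    using collect by (simp add: sum_distrib_left mult.assoc flip: collect)
  also have "\<dots> = (\<Sum>x\<in>y ` J. w x * (\<Sum>x'\<in>y ` J. w x' * K x x'))"
    by (rule collect)
  also have "\<dots> = (\<Sum>x\<in>y ` J. \<Sum>x'\<in>y ` J. w x * w x' * K x x')"
    by (simp add: sum_distrib_left mult.assoc)
  finally show ?thesis
    using dom J unfolding kernel_dominated_def collect by simp
qed

lemma kernel_dominated_nonneg:
  assumes "kernel_dominated K M f" and "0 < K x x"
  shows "0 \<le> M"
proof -
  have fx: "(f x)\<^sup>2 \<le> M * K x x"
    using assms(1) unfolding kernel_dominated_def by (auto dest!: spec[of _ "{x}"] spec[of _ "\<lambda>_. 1"])
  show ?thesis
  proof (rule ccontr)
    assume "\<not> 0 \<le> M"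
    then have "M * K x x < 0"
      using assms(2) by (simp add: mult_neg_pos)
    then show False
      using fx zero_le_power2[of "f x"] by linarith
  qed
qed

lemma kernel_dominated_tendsto:
  fixes f :: "'b \<Rightarrow> 'a \<Rightarrow> real"
  assumes "F \<noteq> bot"
    and dom: "\<forall>\<^sub>F t in F. kernel_dominated K M (f t)"
    and lim: "\<And>x. ((\<lambda>t. f t x) \<longlongrightarrow> g x) F"
  shows "kernel_dominated K M g"
  unfolding kernel_dominated_def
proof (intro allI impI)
  fix S :: "'a set" and lam
  assume "finite S"
  have "((\<lambda>t. (\<Sum>x\<in>S. lam x * f t x)\<^sup>2) \<longlongrightarrow> (\<Sum>x\<in>S. lam x * g x)\<^sup>2) F"
    by (intro tendsto_intros lim)
  moreover have "\<forall>\<^sub>F t in F. (\<Sum>x\<in>S. lam x * f t x)\<^sup>2 \<le> M * (\<Sum>x\<in>S. \<Sum>y\<in>S. lam x * lam y * K x y)"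
    using dom by eventually_elim (use \<open>finite S\<close> in \<open>simp add: kernel_dominated_def\<close>)
  ultimately show "(\<Sum>x\<in>S. lam x * g x)\<^sup>2 \<le> M * (\<Sum>x\<in>S. \<Sum>y\<in>S. lam x * lam y * K x y)"
    by (rule tendsto_le[OF \<open>F \<noteq> bot\<close> tendsto_const])
qed

section \<open>Functions dominated by the exponential kernel are entire power series\<close>

definition exp_kernel :: "real^'n \<Rightarrow> real^'n \<Rightarrow> real" where
  "exp_kernel x y = exp (x \<bullet> y)"

lemma has_sum_exp_kernel_gram:
  assumes "finite J"
  shows "((\<lambda>\<gamma>. (\<Sum>j\<in>J. lam j * mpow (p j) \<gamma>)\<^sup>2 / mfact \<gamma>) has_sum
            (\<Sum>j\<in>J. \<Sum>l\<in>J. lam j * lam l * exp_kernel (p j) (p l))) UNIV"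
proof -
  have "(\<Sum>j\<in>J. lam j * mpow (p j) \<gamma>)\<^sup>2 / mfact \<gamma> =
        (\<Sum>j\<in>J. \<Sum>l\<in>J. lam j * lam l * (mpow (p j) \<gamma> * mpow (p l) \<gamma> / mfact \<gamma>))" for \<gamma>
    by (simp add: power2_eq_square sum_product sum_divide_distrib mult_ac)
  moreover have "((\<lambda>\<gamma>. \<Sum>j\<in>J. \<Sum>l\<in>J. lam j * lam l * (mpow (p j) \<gamma> * mpow (p l) \<gamma> / mfact \<gamma>)) has_sum
            (\<Sum>j\<in>J. \<Sum>l\<in>J. lam j * lam l * exp_kernel (p j) (p l))) UNIV"
    unfolding exp_kernel_def by (intro has_sum_sum assms has_sum_cmult_right has_sum_exp_inner)
  ultimately show ?thesis
    by simp
qed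

lemma exp_dominated_mdiff_bound:
  fixes S :: "(('n::finite \<Rightarrow> nat) \<times> real) set"
  assumes dom: "kernel_dominated exp_kernel M G" and S: "finite S"
  shows "\<exists>Q. ((\<lambda>\<gamma>. (a0 * mpow h \<gamma> + (\<Sum>x\<in>S. b x * mdiff (\<lambda>z. mpow z \<gamma>) (fst x) (snd x)))\<^sup>2 / mfact \<gamma>)
               has_sum Q) UNIV
           \<and> (a0 * G h + (\<Sum>x\<in>S. b x * mdiff G (fst x) (snd x)))\<^sup>2 \<le> M * Q"
proof -
  define J where "J = insert None (Some ` Sigma S (\<lambda>x. mbox (fst x)))"
  define lam :: "((('n \<Rightarrow> nat) \<times> real) \<times> ('n \<Rightarrow> nat)) option \<Rightarrow> real" where
    "lam j = (case j of None \<Rightarrow> a0 | Some (x, \<beta>) \<Rightarrow> b x * mdiff_weight (fst x) (snd x) \<beta>)" for j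
  define p :: "((('n \<Rightarrow> nat) \<times> real) \<times> ('n \<Rightarrow> nat)) option \<Rightarrow> real^'n" where
    "p j = (case j of None \<Rightarrow> h | Some (x, \<beta>) \<Rightarrow> grid (snd x) \<beta>)" for j
  have "finite J"
    unfolding J_def using S by auto
  have comb: "(\<Sum>j\<in>J. lam j * f (p j)) = a0 * f h + (\<Sum>x\<in>S. b x * mdiff f (fst x) (snd x))" for f
  proof -
    have "(\<Sum>j\<in>J. lam j * f (p j)) = a0 * f h + (\<Sum>z\<in>Sigma S (\<lambda>x. mbox (fst x)).
            b (fst z) * mdiff_weight (fst (fst z)) (snd (fst z)) (snd z) * f (grid (snd (fst z)) (snd z)))"
      using S by (simp add: J_def lam_def p_def sum.reindex case_prod_unfold)
    also have "\<dots> = a0 * f h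
        + (\<Sum>x\<in>S. \<Sum>\<beta>\<in>mbox (fst x). b x * mdiff_weight (fst x) (snd x) \<beta> * f (grid (snd x) \<beta>))"
      using S by (subst sum.Sigma) (auto simp: case_prod_unfold)
    finally show ?thesis
      by (simp add: mdiff_def sum_distrib_left mult.assoc)
  qed
  have comb_mpow: "(\<Sum>j\<in>J. lam j * mpow (p j) \<gamma>) =
      a0 * mpow h \<gamma> + (\<Sum>x\<in>S. b x * mdiff (\<lambda>z. mpow z \<gamma>) (fst x) (snd x))" for \<gamma>
    using comb[of "\<lambda>z. mpow z \<gamma>"] by simp
  have "((\<lambda>\<gamma>. (a0 * mpow h \<gamma> + (\<Sum>x\<in>S. b x * mdiff (\<lambda>z. mpow z \<gamma>) (fst x) (snd x)))\<^sup>2 / mfact \<gamma>)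
      has_sum (\<Sum>j\<in>J. \<Sum>l\<in>J. lam j * lam l * exp_kernel (p j) (p l))) UNIV"
    using has_sum_exp_kernel_gram[OF \<open>finite J\<close>, of lam p] by (simp add: comb_mpow)
  moreover have "(a0 * G h + (\<Sum>x\<in>S. b x * mdiff G (fst x) (snd x)))\<^sup>2
      \<le> M * (\<Sum>j\<in>J. \<Sum>l\<in>J. lam j * lam l * exp_kernel (p j) (p l))"
    using kernel_dominatedD[OF dom \<open>finite J\<close>, of lam p] by (simp add: comb)
  ultimately show ?thesis
    by blast
qed

lemma mdiff_mpow_cauchy_majorant:
  assumes t: "0 < t" "t \<le> 1" and s: "0 < s" "s \<le> 1"
    and Q: "((\<lambda>\<gamma>. (mdiff (\<lambda>x. mpow x \<gamma>) \<alpha> t - mdiff (\<lambda>x. mpow x \<gamma>) \<alpha> s)\<^sup>2 / mfact \<gamma>) has_sum Q) UNIV"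
  shows "Q \<le> 2 * (t\<^sup>2 + s\<^sup>2) * defect_majorant_sum \<alpha>"
proof -
  have "((\<lambda>\<gamma>. 2 * (s\<^sup>2 * defect_majorant \<alpha> \<gamma>) + 2 * (t\<^sup>2 * defect_majorant \<alpha> \<gamma>)) has_sum
          (2 * (s\<^sup>2 * defect_majorant_sum \<alpha>) + 2 * (t\<^sup>2 * defect_majorant_sum \<alpha>))) UNIV"
    by (intro has_sum_add has_sum_cmult_right has_sum_defect_majorant)
  moreover have "(mdiff (\<lambda>x. mpow x \<gamma>) \<alpha> t - mdiff (\<lambda>x. mpow x \<gamma>) \<alpha> s)\<^sup>2 / mfact \<gamma>
      \<le> 2 * (s\<^sup>2 * defect_majorant \<alpha> \<gamma>) + 2 * (t\<^sup>2 * defect_majorant \<alpha> \<gamma>)" for \<gamma>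
  proof -
    have "mdiff (\<lambda>x. mpow x \<gamma>) \<alpha> t - mdiff (\<lambda>x. mpow x \<gamma>) \<alpha> s = mdiff_defect s \<alpha> \<gamma> - mdiff_defect t \<alpha> \<gamma>"
      by (simp add: mdiff_defect_def)
    moreover have "(u - v)\<^sup>2 \<le> 2 * u\<^sup>2 + 2 * v\<^sup>2" for u v :: real
      by (smt (verit) zero_le_power2 power2_diff power2_sum)
    ultimately have "(mdiff (\<lambda>x. mpow x \<gamma>) \<alpha> t - mdiff (\<lambda>x. mpow x \<gamma>) \<alpha> s)\<^sup>2 / mfact \<gamma>
        \<le> (2 * (mdiff_defect s \<alpha> \<gamma>)\<^sup>2 + 2 * (mdiff_defect t \<alpha> \<gamma>)\<^sup>2) / mfact \<gamma>"
      using mfact_pos[of \<gamma>] by (simp add: divide_right_mono)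
    also have "\<dots> = 2 * ((mdiff_defect s \<alpha> \<gamma>)\<^sup>2 / mfact \<gamma>) + 2 * ((mdiff_defect t \<alpha> \<gamma>)\<^sup>2 / mfact \<gamma>)"
      by (simp add: add_divide_distrib)
    also have "\<dots> \<le> 2 * (s\<^sup>2 * defect_majorant \<alpha> \<gamma>) + 2 * (t\<^sup>2 * defect_majorant \<alpha> \<gamma>)"
      using mdiff_defect_bound[OF s, of \<alpha> \<gamma>] mdiff_defect_bound[OF t, of \<alpha> \<gamma>] by linarith
    finally show ?thesis .
  qed
  ultimately have "Q \<le> 2 * (s\<^sup>2 * defect_majorant_sum \<alpha>) + 2 * (t\<^sup>2 * defect_majorant_sum \<alpha>)"
    by (intro has_sum_mono[OF Q])
  then show ?thesis
    by (simp add: algebra_simps)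
qed

lemma taylor_mdiff_eq_defect:
  assumes "finite S0"
  shows "mpow h \<gamma> - (\<Sum>\<alpha>\<in>S0. mpow h \<alpha> / mfact \<alpha> * mdiff (\<lambda>x. mpow x \<gamma>) \<alpha> t)
    = (if \<gamma> \<in> S0 then 0 else mpow h \<gamma>) + (\<Sum>\<alpha>\<in>S0. mpow h \<alpha> / mfact \<alpha> * mdiff_defect t \<alpha> \<gamma>)"
proof -
  have "(\<Sum>\<alpha>\<in>S0. mpow h \<alpha> / mfact \<alpha> * (if \<gamma> = \<alpha> then mfact \<alpha> else 0))
      = (if \<gamma> \<in> S0 then mpow h \<gamma> / mfact \<gamma> * mfact \<gamma> else 0)"
    using assms by (simp add: if_distrib[of "\<lambda>x. _ * x"] sum.delta cong: if_cong)
  also have "\<dots> = (if \<gamma> \<in> S0 then mpow h \<gamma> else 0)"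
    using mfact_pos[of \<gamma>] by simp
  finally show ?thesis
    by (simp add: mdiff_defect_def right_diff_distrib sum_subtractf)
qed

lemma has_sum_exp_inner_tail:
  assumes "finite S0"
  shows "((\<lambda>\<gamma>. (if \<gamma> \<in> S0 then 0 else mpow h \<gamma>)\<^sup>2 / mfact \<gamma>) has_sum
           exp (h \<bullet> h) - (\<Sum>\<gamma>\<in>S0. mpow h \<gamma> * mpow h \<gamma> / mfact \<gamma>)) UNIV"
proof -
  have "((\<lambda>\<gamma>. if \<gamma> \<in> S0 then mpow h \<gamma> * mpow h \<gamma> / mfact \<gamma> else 0) has_sum
      (\<Sum>\<gamma>\<in>S0. mpow h \<gamma> * mpow h \<gamma> / mfact \<gamma>)) UNIV"
    using has_sum_finite[OF assms, of "\<lambda>\<gamma>. mpow h \<gamma> * mpow h \<gamma> / mfact \<gamma>"]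
    by (subst (asm) has_sum_cong_neutral[where T=UNIV]) auto
  from has_sum_diff[OF has_sum_exp_inner this]
  show ?thesis
    by (rule back_subst[of "\<lambda>f. (f has_sum _) UNIV"]) (auto simp: power2_eq_square)
qed

lemma taylor_mdiff_majorant:
  assumes t: "0 < t" "t \<le> 1" and S0: "finite S0"
    and Q: "((\<lambda>\<gamma>. (mpow h \<gamma> - (\<Sum>\<alpha>\<in>S0. mpow h \<alpha> / mfact \<alpha> * mdiff (\<lambda>x. mpow x \<gamma>) \<alpha> t))\<^sup>2 / mfact \<gamma>)
            has_sum Q) UNIV"
  shows "Q \<le> 2 * (exp (h \<bullet> h) - (\<Sum>\<gamma>\<in>S0. mpow h \<gamma> * mpow h \<gamma> / mfact \<gamma>))
           + 2 * real (card S0) * (\<Sum>\<alpha>\<in>S0. (mpow h \<alpha> / mfact \<alpha>)\<^sup>2 * (t\<^sup>2 * defect_majorant_sum \<alpha>))"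
proof -
  define b where "b \<alpha> = mpow h \<alpha> / mfact \<alpha>" for \<alpha>
  define A where "A \<gamma> = (if \<gamma> \<in> S0 then 0 else mpow h \<gamma>)" for \<gamma>
  define T where "T = exp (h \<bullet> h) - (\<Sum>\<gamma>\<in>S0. mpow h \<gamma> * mpow h \<gamma> / mfact \<gamma>)"
  have split: "mpow h \<gamma> - (\<Sum>\<alpha>\<in>S0. b \<alpha> * mdiff (\<lambda>x. mpow x \<gamma>) \<alpha> t)
      = A \<gamma> + (\<Sum>\<alpha>\<in>S0. b \<alpha> * mdiff_defect t \<alpha> \<gamma>)" for \<gamma>
    unfolding A_def b_def by (rule taylor_mdiff_eq_defect[OF S0])
  have HA: "((\<lambda>\<gamma>. (A \<gamma>)\<^sup>2 / mfact \<gamma>) has_sum T) UNIV"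
    unfolding A_def T_def by (rule has_sum_exp_inner_tail[OF S0])
  define R where
    "R \<gamma> = 2 * ((A \<gamma>)\<^sup>2 / mfact \<gamma>) + 2 * real (card S0) * (\<Sum>\<alpha>\<in>S0. (b \<alpha>)\<^sup>2 * (t\<^sup>2 * defect_majorant \<alpha> \<gamma>))" for \<gamma>
  have "(R has_sum 2 * T + 2 * real (card S0) * (\<Sum>\<alpha>\<in>S0. (b \<alpha>)\<^sup>2 * (t\<^sup>2 * defect_majorant_sum \<alpha>))) UNIV"
    unfolding R_def by (intro has_sum_add has_sum_cmult_right HA has_sum_sum S0 has_sum_defect_majorant)
  moreover have "(mpow h \<gamma> - (\<Sum>\<alpha>\<in>S0. b \<alpha> * mdiff (\<lambda>x. mpow x \<gamma>) \<alpha> t))\<^sup>2 / mfact \<gamma> \<le> R \<gamma>" for \<gamma>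
  proof -
    define d where "d \<alpha> = b \<alpha> * mdiff_defect t \<alpha> \<gamma>" for \<alpha>
    have "(\<Sum>\<alpha>\<in>S0. d \<alpha>)\<^sup>2 \<le> real (card S0) * (\<Sum>\<alpha>\<in>S0. (d \<alpha>)\<^sup>2)"
      using sum_squared_le_sum_of_squares[of d S0] by (simp add: mult.commute)
    moreover have "(A \<gamma> + (\<Sum>\<alpha>\<in>S0. d \<alpha>))\<^sup>2 \<le> 2 * (A \<gamma>)\<^sup>2 + 2 * (\<Sum>\<alpha>\<in>S0. d \<alpha>)\<^sup>2"
      by (smt (verit) zero_le_power2 power2_diff power2_sum)
    ultimately have "(A \<gamma> + (\<Sum>\<alpha>\<in>S0. d \<alpha>))\<^sup>2 / mfact \<gamma>
        \<le> (2 * (A \<gamma>)\<^sup>2 + 2 * real (card S0) * (\<Sum>\<alpha>\<in>S0. (d \<alpha>)\<^sup>2)) / mfact \<gamma>"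
      using mfact_pos[of \<gamma>] by (intro divide_right_mono) auto
    also have "\<dots> = 2 * ((A \<gamma>)\<^sup>2 / mfact \<gamma>) + 2 * real (card S0) * (\<Sum>\<alpha>\<in>S0. (d \<alpha>)\<^sup>2 / mfact \<gamma>)"
      by (simp add: add_divide_distrib sum_divide_distrib[symmetric])
    also have "(\<Sum>\<alpha>\<in>S0. (d \<alpha>)\<^sup>2 / mfact \<gamma>) \<le> (\<Sum>\<alpha>\<in>S0. (b \<alpha>)\<^sup>2 * (t\<^sup>2 * defect_majorant \<alpha> \<gamma>))"
    proof (rule sum_mono)
      fix \<alpha>
      have "(d \<alpha>)\<^sup>2 / mfact \<gamma> = (b \<alpha>)\<^sup>2 * ((mdiff_defect t \<alpha> \<gamma>)\<^sup>2 / mfact \<gamma>)"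
        by (simp add: d_def power_mult_distrib)
      also have "\<dots> \<le> (b \<alpha>)\<^sup>2 * (t\<^sup>2 * defect_majorant \<alpha> \<gamma>)"
        by (rule mult_left_mono[OF mdiff_defect_bound[OF t]]) simp
      finally show "(d \<alpha>)\<^sup>2 / mfact \<gamma> \<le> (b \<alpha>)\<^sup>2 * (t\<^sup>2 * defect_majorant \<alpha> \<gamma>)" .
    qed
    finally show ?thesis
      unfolding split d_def R_def by (simp add: mult_left_mono)
  qed
  ultimately have "Q \<le> 2 * T + 2 * real (card S0) * (\<Sum>\<alpha>\<in>S0. (b \<alpha>)\<^sup>2 * (t\<^sup>2 * defect_majorant_sum \<alpha>))"
    by (intro has_sum_mono[OF Q[folded b_def]])
  then show ?thesis
    unfolding T_def b_def .
qed

definition mderiv :: "(real^'n \<Rightarrow> real) \<Rightarrow> ('n::finite \<Rightarrow> nat) \<Rightarrow> real" where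
  "mderiv G \<alpha> = lim (\<lambda>k. mdiff G \<alpha> (inverse (real (Suc k))))"

context
  fixes G :: "real^'n::finite \<Rightarrow> real" and M :: real
  assumes dom: "kernel_dominated exp_kernel M G"
begin

lemma exp_dominated_nonneg: "0 \<le> M"
  using kernel_dominated_nonneg[OF dom, of 0] by (simp add: exp_kernel_def)

lemma mdiff_cauchy_bound:
  assumes t: "0 < t" "t \<le> 1" and s: "0 < s" "s \<le> 1"
  shows "(mdiff G \<alpha> t - mdiff G \<alpha> s)\<^sup>2 \<le> M * (2 * (t\<^sup>2 + s\<^sup>2) * defect_majorant_sum \<alpha>)"
proof (cases "t = s")
  case True
  then show ?thesis
    using exp_dominated_nonneg by (simp add: defect_majorant_sum_def prod_nonneg)
next
  case False
  define b :: "('n \<Rightarrow> nat) \<times> real \<Rightarrow> real" where "b x = (if snd x = t then 1 else -1)" for x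
  have diff: "(\<Sum>x\<in>{(\<alpha>, t), (\<alpha>, s)}. b x * mdiff f (fst x) (snd x)) = mdiff f \<alpha> t - mdiff f \<alpha> s" for f
    using False by (simp add: b_def)
  obtain Q where
    Q: "((\<lambda>\<gamma>. (mdiff (\<lambda>x. mpow x \<gamma>) \<alpha> t - mdiff (\<lambda>x. mpow x \<gamma>) \<alpha> s)\<^sup>2 / mfact \<gamma>) has_sum Q) UNIV"
    and le: "(mdiff G \<alpha> t - mdiff G \<alpha> s)\<^sup>2 \<le> M * Q"
    using exp_dominated_mdiff_bound[OF dom, of "{(\<alpha>, t), (\<alpha>, s)}" 0 0 b] by (auto simp: diff)
  have "Q \<le> 2 * (t\<^sup>2 + s\<^sup>2) * defect_majorant_sum \<alpha>"
    by (rule mdiff_mpow_cauchy_majorant[OF t s Q])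
  then show ?thesis
    using le exp_dominated_nonneg by (meson mult_left_mono order_trans)
qed

lemma mdiff_tendsto_mderiv: "(\<lambda>k. mdiff G \<alpha> (inverse (real (Suc k)))) \<longlonglongrightarrow> mderiv G \<alpha>"
proof -
  define t :: "nat \<Rightarrow> real" where "t k = inverse (real (Suc k))" for k
  have t: "0 < t k" "t k \<le> 1" for k
    by (simp_all add: t_def inverse_le_1_iff)
  have "Cauchy (\<lambda>k. mdiff G \<alpha> (t k))"
  proof (rule CauchyI)
    fix e :: real
    assume "0 < e"
    define C where "C = 4 * M * defect_majorant_sum \<alpha>"
    have "0 \<le> C"
      using exp_dominated_nonneg by (simp add: C_def defect_majorant_sum_def prod_nonneg)
    have "(\<lambda>k. sqrt C * t k) \<longlonglongrightarrow> sqrt C * 0"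
      unfolding t_def by (intro tendsto_intros LIMSEQ_inverse_real_of_nat)
    then obtain N where N: "\<bar>sqrt C * t N\<bar> < e"
      using \<open>0 < e\<close> LIMSEQ_D by fastforce
    show "\<exists>N. \<forall>m\<ge>N. \<forall>n\<ge>N. norm (mdiff G \<alpha> (t m) - mdiff G \<alpha> (t n)) < e"
    proof (intro exI allI impI)
      fix m n
      assume "N \<le> m" "N \<le> n"
      then have "t m \<le> t N" "t n \<le> t N"
        by (simp_all add: t_def le_imp_inverse_le)
      have "(mdiff G \<alpha> (t m) - mdiff G \<alpha> (t n))\<^sup>2 \<le> M * (2 * ((t m)\<^sup>2 + (t n)\<^sup>2) * defect_majorant_sum \<alpha>)"
        by (rule mdiff_cauchy_bound[OF t t])
      also have "\<dots> \<le> M * (2 * ((t N)\<^sup>2 + (t N)\<^sup>2) * defect_majorant_sum \<alpha>)"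
        using exp_dominated_nonneg \<open>t m \<le> t N\<close> \<open>t n \<le> t N\<close> t[of m] t[of n]
        by (intro mult_left_mono mult_right_mono add_mono power_mono)
           (auto simp: defect_majorant_sum_def prod_nonneg)
      also have "\<dots> = (sqrt C * t N)\<^sup>2"
        using \<open>0 \<le> C\<close> by (simp add: C_def power_mult_distrib)
      finally have "\<bar>mdiff G \<alpha> (t m) - mdiff G \<alpha> (t n)\<bar> \<le> \<bar>sqrt C * t N\<bar>"
        using abs_le_square_iff by blast
      then show "norm (mdiff G \<alpha> (t m) - mdiff G \<alpha> (t n)) < e"
        using N by simp
    qed
  qed
  then show ?thesis
    unfolding mderiv_def t_def[symmetric] by (simp add: Cauchy_convergent_iff convergent_LIMSEQ_iff)
qed

lemma taylor_mdiff_bound: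
  assumes t: "0 < t" "t \<le> 1" and S0: "finite S0"
  shows "(G h - (\<Sum>\<alpha>\<in>S0. mpow h \<alpha> / mfact \<alpha> * mdiff G \<alpha> t))\<^sup>2
     \<le> M * (2 * (exp (h \<bullet> h) - (\<Sum>\<gamma>\<in>S0. mpow h \<gamma> * mpow h \<gamma> / mfact \<gamma>))
             + 2 * real (card S0) * (\<Sum>\<alpha>\<in>S0. (mpow h \<alpha> / mfact \<alpha>)\<^sup>2 * (t\<^sup>2 * defect_majorant_sum \<alpha>)))"
proof -
  define b :: "('n \<Rightarrow> nat) \<times> real \<Rightarrow> real" where "b x = - (mpow h (fst x) / mfact (fst x))" for x
  have inj: "inj_on (\<lambda>\<alpha>. (\<alpha>, t)) S0"
    by (auto simp: inj_on_def)
  have comb: "(\<Sum>x\<in>(\<lambda>\<alpha>. (\<alpha>, t)) ` S0. b x * mdiff f (fst x) (snd x))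
      = - (\<Sum>\<alpha>\<in>S0. mpow h \<alpha> / mfact \<alpha> * mdiff f \<alpha> t)" for f
    by (simp add: sum.reindex[OF inj] b_def sum_negf)
  obtain Q where
    Q: "((\<lambda>\<gamma>. (mpow h \<gamma> - (\<Sum>\<alpha>\<in>S0. mpow h \<alpha> / mfact \<alpha> * mdiff (\<lambda>x. mpow x \<gamma>) \<alpha> t))\<^sup>2 / mfact \<gamma>) has_sum Q) UNIV"
    and le: "(G h - (\<Sum>\<alpha>\<in>S0. mpow h \<alpha> / mfact \<alpha> * mdiff G \<alpha> t))\<^sup>2 \<le> M * Q"
    using exp_dominated_mdiff_bound[OF dom, of "(\<lambda>\<alpha>. (\<alpha>, t)) ` S0" 1 h b] S0 by (auto simp: comb)
  then show ?thesis
    using taylor_mdiff_majorant[OF t S0 Q] exp_dominated_nonneg by (meson mult_left_mono order_trans)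
qed

lemma taylor_mderiv_bound:
  assumes S0: "finite S0"
  shows "(G h - (\<Sum>\<alpha>\<in>S0. mpow h \<alpha> / mfact \<alpha> * mderiv G \<alpha>))\<^sup>2
     \<le> M * (2 * (exp (h \<bullet> h) - (\<Sum>\<gamma>\<in>S0. mpow h \<gamma> * mpow h \<gamma> / mfact \<gamma>)))"
proof (rule LIMSEQ_le)
  define t :: "nat \<Rightarrow> real" where "t k = inverse (real (Suc k))" for k
  define T where "T = exp (h \<bullet> h) - (\<Sum>\<gamma>\<in>S0. mpow h \<gamma> * mpow h \<gamma> / mfact \<gamma>)"
  define E where "E \<tau> = 2 * real (card S0) * (\<Sum>\<alpha>\<in>S0. (mpow h \<alpha> / mfact \<alpha>)\<^sup>2 * (\<tau>\<^sup>2 * defect_majorant_sum \<alpha>))"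
    for \<tau> :: real
  show "(\<lambda>k. (G h - (\<Sum>\<alpha>\<in>S0. mpow h \<alpha> / mfact \<alpha> * mdiff G \<alpha> (t k)))\<^sup>2) \<longlonglongrightarrow>
      (G h - (\<Sum>\<alpha>\<in>S0. mpow h \<alpha> / mfact \<alpha> * mderiv G \<alpha>))\<^sup>2"
    unfolding t_def by (intro tendsto_intros mdiff_tendsto_mderiv)
  have "(\<lambda>k. M * (2 * T + E (t k))) \<longlonglongrightarrow> M * (2 * T + E 0)"
    unfolding E_def t_def by (intro tendsto_intros LIMSEQ_inverse_real_of_nat)
  then show "(\<lambda>k. M * (2 * T + E (t k))) \<longlonglongrightarrow> M * (2 * T)"
    by (simp add: E_def)
  show "\<exists>N. \<forall>k\<ge>N. (G h - (\<Sum>\<alpha>\<in>S0. mpow h \<alpha> / mfact \<alpha> * mdiff G \<alpha> (t k)))\<^sup>2 \<le> M * (2 * T + E (t k))"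
    using taylor_mdiff_bound[OF _ _ S0] unfolding T_def E_def t_def
    by (auto simp: inverse_le_1_iff)
qed

lemma has_sum_mderiv: "((\<lambda>\<alpha>. mderiv G \<alpha> / mfact \<alpha> * mpow h \<alpha>) has_sum G h) UNIV"
  unfolding has_sum_def
proof (rule tendsto_sandwich)
  define u where "u S0 = sqrt (M * (2 * (exp (h \<bullet> h) - (\<Sum>\<gamma>\<in>S0. mpow h \<gamma> * mpow h \<gamma> / mfact \<gamma>))))" for S0
  have "((\<lambda>S0. \<Sum>\<gamma>\<in>S0. mpow h \<gamma> * mpow h \<gamma> / mfact \<gamma>) \<longlongrightarrow> exp (h \<bullet> h)) (finite_subsets_at_top UNIV)"
    using has_sum_exp_inner[of h h] unfolding has_sum_def .
  then have "(u \<longlongrightarrow> sqrt (M * (2 * (exp (h \<bullet> h) - exp (h \<bullet> h))))) (finite_subsets_at_top UNIV)"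
    unfolding u_def by (intro tendsto_intros)
  then have u: "(u \<longlongrightarrow> 0) (finite_subsets_at_top UNIV)"
    by simp
  have "\<bar>G h - (\<Sum>\<alpha>\<in>S0. mderiv G \<alpha> / mfact \<alpha> * mpow h \<alpha>)\<bar> \<le> u S0" if "finite S0" for S0
    unfolding u_def using real_sqrt_le_mono[OF taylor_mderiv_bound[OF that, of h]]
    by (simp add: mult_ac)
  then have "\<forall>\<^sub>F S0 in finite_subsets_at_top UNIV.
      G h - u S0 \<le> (\<Sum>\<alpha>\<in>S0. mderiv G \<alpha> / mfact \<alpha> * mpow h \<alpha>)
      \<and> (\<Sum>\<alpha>\<in>S0. mderiv G \<alpha> / mfact \<alpha> * mpow h \<alpha>) \<le> G h + u S0"
    by (intro eventually_finite_subsets_at_top_weakI) (fastforce simp: abs_le_iff)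
  then show "\<forall>\<^sub>F S0 in finite_subsets_at_top UNIV. G h - u S0 \<le> (\<Sum>\<alpha>\<in>S0. mderiv G \<alpha> / mfact \<alpha> * mpow h \<alpha>)"
    and "\<forall>\<^sub>F S0 in finite_subsets_at_top UNIV. (\<Sum>\<alpha>\<in>S0. mderiv G \<alpha> / mfact \<alpha> * mpow h \<alpha>) \<le> G h + u S0"
    by (auto elim: eventually_mono)
  show "((\<lambda>S0. G h - u S0) \<longlongrightarrow> G h) (finite_subsets_at_top UNIV)"
    and "((\<lambda>S0. G h + u S0) \<longlongrightarrow> G h) (finite_subsets_at_top UNIV)"
    using tendsto_diff[OF tendsto_const u] tendsto_add[OF tendsto_const u] by simp_all
qed

end

section \<open>Reproducing kernel Hilbert spaces and Koopman operators\<close>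

locale rkhs =
  fixes K :: "'a \<Rightarrow> 'a \<Rightarrow> real" and H :: "('a \<Rightarrow> real) set"
    and ip :: "('a \<Rightarrow> real) \<Rightarrow> ('a \<Rightarrow> real) \<Rightarrow> real"
  assumes is_rkhs: "is_rkhs K H ip"
begin

lemma zero_mem: "(\<lambda>x. 0) \<in> H"
  and add_mem: "f \<in> H \<Longrightarrow> g \<in> H \<Longrightarrow> (\<lambda>x. f x + g x) \<in> H"
  and scale_mem: "f \<in> H \<Longrightarrow> (\<lambda>x. c * f x) \<in> H"
  and ip_sym: "f \<in> H \<Longrightarrow> g \<in> H \<Longrightarrow> ip f g = ip g f"
  and ip_add_left: "f \<in> H \<Longrightarrow> g \<in> H \<Longrightarrow> h \<in> H \<Longrightarrow> ip (\<lambda>x. f x + g x) h = ip f h + ip g h"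
  and ip_scale_left: "f \<in> H \<Longrightarrow> g \<in> H \<Longrightarrow> ip (\<lambda>x. c * f x) g = c * ip f g"
  and ip_self_nonneg: "f \<in> H \<Longrightarrow> 0 \<le> ip f f"
  and ip_self_eq_0: "f \<in> H \<Longrightarrow> ip f f = 0 \<Longrightarrow> f = (\<lambda>x. 0)"
  and kernel_mem: "(\<lambda>x. K x y) \<in> H"
  and reproducing: "f \<in> H \<Longrightarrow> ip f (\<lambda>x. K x y) = f y"
  using is_rkhs unfolding is_rkhs_def by blast+

lemma ip_add_right:
  assumes "f \<in> H" "g \<in> H" "h \<in> H"
  shows "ip h (\<lambda>x. f x + g x) = ip h f + ip h g"
proof -
  have "ip h (\<lambda>x. f x + g x) = ip f h + ip g h"
    using assms by (simp add: ip_sym[OF assms(3) add_mem] ip_add_left)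
  then show ?thesis
    using assms by (simp add: ip_sym)
qed

lemma ip_scale_right:
  assumes "f \<in> H" "g \<in> H"
  shows "ip g (\<lambda>x. c * f x) = c * ip g f"
proof -
  have "ip g (\<lambda>x. c * f x) = c * ip f g"
    using assms by (simp add: ip_sym[OF assms(2) scale_mem] ip_scale_left)
  then show ?thesis
    using assms by (simp add: ip_sym)
qed

lemma span_mem: "finite J \<Longrightarrow> (\<lambda>x. \<Sum>j\<in>J. lam j * K x (y j)) \<in> H"
proof (induction J rule: finite_induct)
  case (insert j J)
  have "(\<lambda>x. lam j * K x (y j) + (\<Sum>j\<in>J. lam j * K x (y j))) \<in> H"
    by (intro add_mem scale_mem kernel_mem insert.IH)
  then show ?case
    using insert by simp
qed (simp add: zero_mem)

lemma ip_span:
  assumes "f \<in> H" "finite J"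
  shows "ip f (\<lambda>x. \<Sum>j\<in>J. lam j * K x (y j)) = (\<Sum>j\<in>J. lam j * f (y j))"
  using assms(2)
proof (induction J rule: finite_induct)
  case empty
  have "ip f (\<lambda>x. 0 * 0) = 0 * ip f (\<lambda>x. 0)"
    by (rule ip_scale_right[OF zero_mem assms(1)])
  then show ?case
    by simp
next
  case (insert j J)
  then show ?case
    using assms(1) by (simp add: ip_add_right ip_scale_right scale_mem kernel_mem span_mem reproducing)
qed

lemma ip_span_span:
  "finite J \<Longrightarrow> ip (\<lambda>x. \<Sum>j\<in>J. lam j * K x (y j)) (\<lambda>x. \<Sum>j\<in>J. lam j * K x (y j))
      = (\<Sum>j\<in>J. \<Sum>l\<in>J. lam j * lam l * K (y j) (y l))"
  by (simp add: ip_span span_mem sum_distrib_left mult_ac)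

lemma gram_nonneg: "finite J \<Longrightarrow> 0 \<le> (\<Sum>j\<in>J. \<Sum>l\<in>J. lam j * lam l * K (y j) (y l))"
  using ip_self_nonneg[OF span_mem, of J lam y] by (simp add: ip_span_span)

lemma cauchy_schwarz:
  assumes f: "f \<in> H" and g: "g \<in> H"
  shows "(ip f g)\<^sup>2 \<le> ip f f * ip g g"
proof (cases "ip g g = 0")
  case True
  then have "ip f g = ip f (\<lambda>x. 0 * 0)"
    using ip_self_eq_0[OF g] by simp
  also have "\<dots> = 0"
    using ip_scale_right[OF zero_mem f, of 0] by simp
  finally show ?thesis
    using True by simp
next
  case False
  then have gg: "0 < ip g g"
    using ip_self_nonneg[OF g] by simp
  define c where "c = - ip f g / ip g g"
  have fg: "(\<lambda>x. f x + c * g x) \<in> H"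
    by (intro add_mem scale_mem f g)
  have "0 \<le> ip (\<lambda>x. f x + c * g x) (\<lambda>x. f x + c * g x)"
    by (rule ip_self_nonneg[OF fg])
  also have "\<dots> = ip f f + 2 * c * ip f g + c\<^sup>2 * ip g g"
    using f g ip_sym[OF f g]
    by (simp add: ip_add_left ip_add_right ip_scale_left ip_scale_right scale_mem fg power2_eq_square
        algebra_simps)
  also have "\<dots> = ip f f - (ip f g)\<^sup>2 / ip g g"
    using gg by (simp add: c_def power2_eq_square field_simps)
  finally show ?thesis
    using gg by (simp add: field_simps)
qed

lemma member_kernel_dominated:
  assumes "f \<in> H"
  shows "kernel_dominated K (ip f f) f"
  unfolding kernel_dominated_def
proof (intro allI impI)
  fix S :: "'a set" and lam
  assume "finite S"
  from cauchy_schwarz[OF assms span_mem[OF this, of lam "\<lambda>x. x"]]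
  show "(\<Sum>x\<in>S. lam x * f x)\<^sup>2 \<le> ip f f * (\<Sum>x\<in>S. \<Sum>y\<in>S. lam x * lam y * K x y)"
    using ip_span[OF assms \<open>finite S\<close>, of lam "\<lambda>x. x"] ip_span_span[OF \<open>finite S\<close>, of lam "\<lambda>x. x"]
    by simp
qed

lemma kernel_dominated_mono:
  assumes "kernel_dominated K M f" "M \<le> M'"
  shows "kernel_dominated K M' f"
  unfolding kernel_dominated_def
proof (intro allI impI)
  fix S :: "'a set" and lam
  assume "finite S"
  then have "(\<Sum>x\<in>S. lam x * f x)\<^sup>2 \<le> M * (\<Sum>x\<in>S. \<Sum>y\<in>S. lam x * lam y * K x y)"
    using assms(1) by (simp add: kernel_dominated_def)
  also have "\<dots> \<le> M' * (\<Sum>x\<in>S. \<Sum>y\<in>S. lam x * lam y * K x y)"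
    using gram_nonneg[OF \<open>finite S\<close>, of lam "\<lambda>x. x"] assms(2) by (simp add: mult_right_mono)
  finally show "(\<Sum>x\<in>S. lam x * f x)\<^sup>2 \<le> M' * (\<Sum>x\<in>S. \<Sum>y\<in>S. lam x * lam y * K x y)" .
qed

end

context rkhs
begin

lemma koopman_gram_le:
  assumes maps: "\<forall>g\<in>H. g \<circ> F \<in> H"
    and bounded: "\<forall>g\<in>H. sqrt (ip (g \<circ> F) (g \<circ> F)) \<le> C * sqrt (ip g g)"
    and J: "finite J"
  shows "(\<Sum>j\<in>J. \<Sum>l\<in>J. lam j * lam l * K (F (y j)) (F (y l)))
           \<le> C\<^sup>2 * (\<Sum>j\<in>J. \<Sum>l\<in>J. lam j * lam l * K (y j) (y l))"
proof -
  define g where "g = (\<lambda>x. \<Sum>j\<in>J. lam j * K x (F (y j)))"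
  define s where "s = (\<lambda>x. \<Sum>j\<in>J. lam j * K x (y j))"
  have g: "g \<in> H" and s: "s \<in> H" and gF: "g \<circ> F \<in> H"
    using span_mem[OF J] maps by (auto simp: g_def s_def)
  have "ip g g = (\<Sum>j\<in>J. lam j * g (F (y j)))"
    using ip_span[OF g J] by (simp add: g_def)
  also have "\<dots> = ip (g \<circ> F) s"
    using ip_span[OF gF J] by (simp add: s_def)
  finally have "ip g g = ip (g \<circ> F) s" .
  also have "\<dots> \<le> sqrt (ip (g \<circ> F) (g \<circ> F)) * sqrt (ip s s)"
    using cauchy_schwarz[OF gF s]
    by (metis real_sqrt_abs real_sqrt_le_mono real_sqrt_mult abs_ge_self order_trans)
  also have "\<dots> \<le> C * sqrt (ip g g) * sqrt (ip s s)"
    using bounded g ip_self_nonneg[OF s] by (intro mult_right_mono) auto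
  finally have le: "ip g g \<le> C * sqrt (ip g g) * sqrt (ip s s)" .
  have "ip g g \<le> C\<^sup>2 * ip s s"
  proof (cases "ip g g = 0")
    case False
    then have pos: "0 < sqrt (ip g g)"
      using ip_self_nonneg[OF g] by simp
    have "sqrt (ip g g) * sqrt (ip g g) \<le> C * sqrt (ip s s) * sqrt (ip g g)"
      using le ip_self_nonneg[OF g] real_sqrt_mult_self[of "ip g g"] by (simp add: mult_ac)
    then have "sqrt (ip g g) \<le> C * sqrt (ip s s)"
      by (rule mult_right_le_imp_le[OF _ pos])
    then have "(sqrt (ip g g))\<^sup>2 \<le> (C * sqrt (ip s s))\<^sup>2"
      using pos by (intro power_mono) auto
    then show ?thesis
      using ip_self_nonneg[OF g] ip_self_nonneg[OF s] by (simp add: power_mult_distrib)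
  qed (use ip_self_nonneg[OF s] in simp)
  then show ?thesis
    using ip_span_span[OF J] by (simp add: g_def s_def)
qed

lemma koopman_kernel_dominated:
  assumes maps: "\<forall>g\<in>H. g \<circ> F \<in> H"
    and bounded: "\<forall>g\<in>H. sqrt (ip (g \<circ> F) (g \<circ> F)) \<le> C * sqrt (ip g g)"
    and dom: "kernel_dominated K M \<phi>" and "0 \<le> M"
  shows "kernel_dominated K (M * C\<^sup>2) (\<phi> \<circ> F)"
  unfolding kernel_dominated_def
proof (intro allI impI)
  fix S :: "'a set" and lam
  assume S: "finite S"
  have "(\<Sum>x\<in>S. lam x * (\<phi> \<circ> F) x)\<^sup>2 \<le> M * (\<Sum>x\<in>S. \<Sum>y\<in>S. lam x * lam y * K (F x) (F y))"
    using kernel_dominatedD[OF dom S, of lam F] by simp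
  also have "\<dots> \<le> M * (C\<^sup>2 * (\<Sum>x\<in>S. \<Sum>y\<in>S. lam x * lam y * K x y))"
    using koopman_gram_le[OF maps bounded S, of lam "\<lambda>x. x"] \<open>0 \<le> M\<close> by (intro mult_left_mono) auto
  finally show "(\<Sum>x\<in>S. lam x * (\<phi> \<circ> F) x)\<^sup>2 \<le> M * C\<^sup>2 * (\<Sum>x\<in>S. \<Sum>y\<in>S. lam x * lam y * K x y)"
    by (simp add: mult.assoc)
qed

end

section \<open>The Gaussian kernel\<close>

lemma gauss_kernel_section_dominated:
  fixes H :: "(real^'n::finite \<Rightarrow> real) set"
  assumes "is_rkhs gauss_kernel H ip"
  shows "kernel_dominated gauss_kernel 1 (\<lambda>x::real^'n. gauss_kernel x 0)"
proof -
  interpret rkhs gauss_kernel H ip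
    by (rule rkhs.intro) fact
  have "ip (\<lambda>x. gauss_kernel x 0) (\<lambda>x. gauss_kernel x 0) = 1"
    using reproducing[OF kernel_mem, of 0 0] by (simp add: gauss_kernel_def)
  then show ?thesis
    using member_kernel_dominated[OF kernel_mem, of 0] by simp
qed

lemma has_field_derivative_gauss_kernel_axis:
  fixes z :: "real^'n::finite"
  shows "((\<lambda>t. gauss_kernel z (t *\<^sub>R axis i 1)) has_field_derivative z $ i * gauss_kernel z 0) (at 0)"
proof -
  have "(norm (z - t *\<^sub>R axis i 1))\<^sup>2 = z \<bullet> z - 2 * t * z $ i + t\<^sup>2" for t
    unfolding power2_norm_eq_inner
    by (simp add: inner_diff_left inner_diff_right inner_axis inner_commute algebra_simps power2_eq_square)
  then have "(\<lambda>t. gauss_kernel z (t *\<^sub>R axis i 1)) = (\<lambda>t. exp (- (z \<bullet> z - 2 * t * z $ i + t\<^sup>2) / 2))"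
    by (simp add: gauss_kernel_def)
  moreover have "((\<lambda>t. exp (- (z \<bullet> z - 2 * t * z $ i + t\<^sup>2) / 2)) has_field_derivative
      exp (- (z \<bullet> z - 2 * 0 * z $ i + 0\<^sup>2) / 2) * (- (0 - 2 * 1 * z $ i + 2 * 0) / 2)) (at 0)"
    by (auto intro!: derivative_eq_intros)
  ultimately show ?thesis
    by (simp add: gauss_kernel_def power2_norm_eq_inner mult.commute)
qed

text \<open>The coordinate function times the kernel section at \<open>0\<close> is the derivative of
  \<open>t \<mapsto> K(-, t e\<^sub>i)\<close> at \<open>0\<close>; the difference quotients have norm at most \<open>1\<close> because
  \<open>2 - 2 exp (-t\<^sup>2/2) \<le> t\<^sup>2\<close>.\<close>
lemma gauss_kernel_coordinate_section_dominated:
  fixes H :: "(real^'n::finite \<Rightarrow> real) set"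
  assumes "is_rkhs gauss_kernel H ip"
  shows "kernel_dominated gauss_kernel 1 (\<lambda>x::real^'n. x $ i * gauss_kernel x 0)"
proof -
  interpret rkhs gauss_kernel H ip
    by (rule rkhs.intro) fact
  define e :: "real^'n" where "e = axis i 1"
  define \<psi> where "\<psi> t x = (gauss_kernel x (t *\<^sub>R e) - gauss_kernel x 0) / t" for t x
  have dom: "kernel_dominated gauss_kernel 1 (\<psi> t)" if "t \<noteq> 0" for t
  proof -
    define lam :: "bool \<Rightarrow> real" where "lam b = (if b then 1 / t else - 1 / t)" for b
    define y :: "bool \<Rightarrow> real^'n" where "y b = (if b then t *\<^sub>R e else 0)" for b
    have \<psi>: "\<psi> t = (\<lambda>x. \<Sum>b\<in>UNIV. lam b * gauss_kernel x (y b))"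
      by (auto simp: \<psi>_def lam_def y_def UNIV_bool diff_divide_distrib)
    have "ip (\<psi> t) (\<psi> t) = (2 - 2 * exp (- t\<^sup>2 / 2)) / t\<^sup>2"
      unfolding \<psi> ip_span_span[OF finite]
      by (simp add: UNIV_bool lam_def y_def e_def gauss_kernel_def power2_eq_square field_simps)
         (simp add: diff_divide_distrib)
    also have "\<dots> \<le> 1"
      using exp_ge_add_one_self[of "- t\<^sup>2 / 2"] that by (simp add: divide_le_eq_1)
    finally show ?thesis
      using member_kernel_dominated[of "\<psi> t"] kernel_dominated_mono span_mem[OF finite] unfolding \<psi>
      by blast
  qed
  have "\<forall>\<^sub>F t in at 0. kernel_dominated gauss_kernel 1 (\<psi> t)"
    unfolding eventually_at_filter by (rule always_eventually) (auto intro: dom)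
  moreover have "((\<lambda>t. \<psi> t x) \<longlongrightarrow> x $ i * gauss_kernel x 0) (at 0)" for x
    using has_field_derivative_gauss_kernel_axis[of x i] unfolding has_field_derivative_iff
    by (simp add: \<psi>_def e_def)
  ultimately show ?thesis
    by (rule kernel_dominated_tendsto[OF at_neq_bot])
qed

definition gauss_coeff :: "nat \<Rightarrow> real" where
  "gauss_coeff k = (if even k then (-1/2) ^ (k div 2) / fact (k div 2) else 0)"

lemma has_sum_gauss_coeff: "((\<lambda>k. gauss_coeff k * x ^ k) has_sum exp (- x\<^sup>2 / 2)) UNIV"
proof -
  have "(- x\<^sup>2 / 2) ^ m / fact m = gauss_coeff (2 * m) * x ^ (2 * m)" for m
    by (simp add: gauss_coeff_def power_mult power_mult_distrib[symmetric])
  then have "((\<lambda>m. gauss_coeff (2 * m) * x ^ (2 * m)) has_sum exp (- x\<^sup>2 / 2)) UNIV"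
    using has_sum_exp[of "- x\<^sup>2 / 2"] by simp
  then have "((\<lambda>k. gauss_coeff k * x ^ k) has_sum exp (- x\<^sup>2 / 2)) (range (\<lambda>m. 2 * m))"
    by (subst has_sum_reindex) (auto simp: inj_on_def o_def)
  then show ?thesis
    by (subst (asm) has_sum_cong_neutral[where T=UNIV]) (auto simp: gauss_coeff_def elim!: evenE)
qed

lemma has_sum_gauss_mpow:
  "((\<lambda>\<alpha>. (\<Prod>i\<in>UNIV. gauss_coeff (\<alpha> i)) * mpow h \<alpha>) has_sum exp (- (norm h)\<^sup>2 / 2)) UNIV"
proof -
  have "((\<lambda>\<alpha>. \<Prod>i\<in>UNIV. gauss_coeff (\<alpha> i) * (h $ i) ^ \<alpha> i) has_sum (\<Prod>i\<in>UNIV. exp (- (h $ i)\<^sup>2 / 2))) UNIV"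
    using real_has_sum_imp_abs_summable[OF has_sum_gauss_coeff]
    by (intro has_sum_prod_multi_index has_sum_gauss_coeff) simp
  moreover have "(norm h)\<^sup>2 = (\<Sum>i\<in>UNIV. (h $ i)\<^sup>2)"
    unfolding power2_norm_eq_inner inner_vec_def by (simp add: power2_eq_square)
  then have "(\<Prod>i\<in>UNIV. exp (- (h $ i)\<^sup>2 / 2)) = exp (- (norm h)\<^sup>2 / 2)"
    by (simp add: exp_sum[symmetric] sum_divide_distrib[symmetric] sum_negf)
  ultimately show ?thesis
    by (simp add: mpow_def prod.distrib)
qed

lemma gauss_kernel_shift:
  "exp ((norm u)\<^sup>2 / 2) * exp ((norm v)\<^sup>2 / 2) * gauss_kernel (a + u) (a + v) = exp_kernel u v"
proof -
  have "(norm (u - v))\<^sup>2 = (norm u)\<^sup>2 + (norm v)\<^sup>2 - 2 * (u \<bullet> v)"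
    unfolding power2_norm_eq_inner by (simp add: inner_diff_left inner_diff_right inner_commute)
  then show ?thesis
    by (simp add: gauss_kernel_def exp_kernel_def exp_add[symmetric] field_simps)
qed

lemma gauss_dominated_imp_exp_dominated:
  fixes f :: "real^'n::finite \<Rightarrow> real"
  assumes "kernel_dominated gauss_kernel M f"
  shows "kernel_dominated exp_kernel M (\<lambda>h. exp ((norm h)\<^sup>2 / 2) * f (a + h))"
  unfolding kernel_dominated_def
proof (intro allI impI)
  fix S :: "(real^'n) set" and lam
  assume "finite S"
  define lam' :: "real^'n \<Rightarrow> real" where "lam' h = lam h * exp ((norm h)\<^sup>2 / 2)" for h
  have "(\<Sum>h\<in>S. lam' h * f (a + h))\<^sup>2 \<le> M * (\<Sum>h\<in>S. \<Sum>h'\<in>S. lam' h * lam' h' * gauss_kernel (a + h) (a + h'))"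
    by (rule kernel_dominatedD[OF assms \<open>finite S\<close>])
  moreover have "(\<Sum>h\<in>S. \<Sum>h'\<in>S. lam' h * lam' h' * gauss_kernel (a + h) (a + h'))
      = (\<Sum>h\<in>S. \<Sum>h'\<in>S. lam h * lam h' * exp_kernel h h')"
    using gauss_kernel_shift[of _ _ a] by (intro sum.cong refl) (simp add: lam'_def mult_ac)
  moreover have "(\<Sum>h\<in>S. lam' h * f (a + h)) = (\<Sum>h\<in>S. lam h * (exp ((norm h)\<^sup>2 / 2) * f (a + h)))"
    by (simp add: lam'_def mult_ac)
  ultimately show "(\<Sum>h\<in>S. lam h * (exp ((norm h)\<^sup>2 / 2) * f (a + h)))\<^sup>2
      \<le> M * (\<Sum>h\<in>S. \<Sum>h'\<in>S. lam h * lam h' * exp_kernel h h')"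
    by simp
qed

lemma gauss_dominated_power_series:
  assumes "kernel_dominated gauss_kernel M f"
  shows "\<exists>c. \<forall>x. ((\<lambda>\<alpha>. c \<alpha> * mpow (x - a) \<alpha>) has_sum f x) UNIV"
proof -
  define G where "G h = exp ((norm h)\<^sup>2 / 2) * f (a + h)" for h
  have "kernel_dominated exp_kernel M G"
    unfolding G_def by (rule gauss_dominated_imp_exp_dominated[OF assms])
  then have series: "((\<lambda>\<alpha>. mderiv G \<alpha> / mfact \<alpha> * mpow h \<alpha>) has_sum G h) UNIV" for h
    by (rule has_sum_mderiv)
  have "((\<lambda>\<gamma>. mconv (\<lambda>\<alpha>. \<Prod>i\<in>UNIV. gauss_coeff (\<alpha> i)) (\<lambda>\<alpha>. mderiv G \<alpha> / mfact \<alpha>) \<gamma> * mpow (x - a) \<gamma>)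
      has_sum f x) UNIV" for x
    using has_sum_mconv[OF has_sum_gauss_mpow series, of "x - a"] by (simp add: G_def exp_minus field_simps)
  then show ?thesis
    by blast
qed

lemma gauss_dominated_quotient_analytic:
  fixes p q :: "real^'n::finite \<Rightarrow> real"
  assumes p: "kernel_dominated gauss_kernel M p" and q: "kernel_dominated gauss_kernel M' q"
    and nonzero: "\<And>x. p x \<noteq> 0"
  shows "real_analytic_on (\<lambda>x. q x / p x) UNIV"
  unfolding real_analytic_on_def
proof
  fix a :: "real^'n"
  obtain cp cq where cp: "\<And>x. ((\<lambda>\<alpha>. cp \<alpha> * mpow (x - a) \<alpha>) has_sum p x) UNIV"
    and cq: "\<And>x. ((\<lambda>\<alpha>. cq \<alpha> * mpow (x - a) \<alpha>) has_sum q x) UNIV"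
    using gauss_dominated_power_series[OF p] gauss_dominated_power_series[OF q] by metis
  obtain r c where "0 < r"
    and "\<And>x. x \<in> ball a r \<Longrightarrow> ((\<lambda>\<alpha>. c \<alpha> * mpow (x - a) \<alpha>) has_sum q x / p x) UNIV"
    using power_series_divide[OF cq cp nonzero] by blast
  then show "\<exists>r>0. \<exists>c. \<forall>x\<in>ball a r.
      ((\<lambda>\<alpha>. c \<alpha> * (\<Prod>i\<in>UNIV. (x $ i - a $ i) ^ \<alpha> i)) has_sum q x / p x) UNIV"
    by (intro exI[of _ r] conjI exI[of _ c] ballI) (auto simp: mpow_def)
qed

theorem lemma2:
  fixes F :: "real ^ 'n \<Rightarrow> real ^ 'n"
    and H :: "(real ^ 'n \<Rightarrow> real) set"
    and ip :: "(real ^ 'n \<Rightarrow> real) \<Rightarrow> (real ^ 'n \<Rightarrow> real) \<Rightarrow> real"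
  assumes rkhs: "is_rkhs gauss_kernel H ip"
    and maps: "\<forall>g\<in>H. g \<circ> F \<in> H"
    and bounded: "\<exists>C. \<forall>g\<in>H. sqrt (ip (g \<circ> F) (g \<circ> F)) \<le> C * sqrt (ip g g)"
  shows "\<forall>i. real_analytic_on (\<lambda>x. F x $ i) UNIV"
proof
  fix i :: 'n
  interpret rkhs gauss_kernel H ip
    by (rule rkhs.intro) (rule rkhs)
  obtain C where C: "\<forall>g\<in>H. sqrt (ip (g \<circ> F) (g \<circ> F)) \<le> C * sqrt (ip g g)"
    using bounded by blast
  have "kernel_dominated gauss_kernel (1 * C\<^sup>2) (\<lambda>x. gauss_kernel (F x) 0)"
    using koopman_kernel_dominated[OF maps C gauss_kernel_section_dominated[OF rkhs]]
    by (simp add: o_def)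
  moreover have "kernel_dominated gauss_kernel (1 * C\<^sup>2) (\<lambda>x. F x $ i * gauss_kernel (F x) 0)"
    using koopman_kernel_dominated[OF maps C gauss_kernel_coordinate_section_dominated[OF rkhs]]
    by (simp add: o_def)
  ultimately have "real_analytic_on (\<lambda>x. F x $ i * gauss_kernel (F x) 0 / gauss_kernel (F x) 0) UNIV"
    by (rule gauss_dominated_quotient_analytic) (simp add: gauss_kernel_def)
  then show "real_analytic_on (\<lambda>x. F x $ i) UNIV"
    by (simp add: gauss_kernel_def)
qed

end
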